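(* Let $d\geq1$, let $A\subset\mathbb{R}^d$ have positive reach and let $a\in T_d(A)\cap\partial A$. Then: (i) If $d\geq 2$, there exist $\varepsilon>0$, $u\in S^{d-1}$ and a Lipschitz semiconcave function $f:u^\perp\to\mathbb{R}$ such that $A\cap B(a,\varepsilon)=\operatorname{hyp}_uf\cap B(a,\varepsilon)$. (ii) There exist a convex body $K\subset\mathbb{R}^d$ and a surjective $C^{1,1}$-diffeomorphism $\Phi:\mathbb{R}^d\to\mathbb{R}^d$ such that $\Phi(K)$ is a neighbourhood of $a$ in $A$.
   Context: A set has positive reach if there is $\varepsilon>0$ such that every point at distance less than $\varepsilon$ from it has a unique nearest point in it. $\operatorname{Tan}(A,x)$ is the tangent cone ($u\in\operatorname{Tan}(A,x)$ iff $u=0$ or $r_i(x_i-x)\to u$ for some $x\neq x_i\in A$, $x_i\to x$, $r_i>0$), and $T_d(A)$ is the set of $x\in A$ with $\dim\operatorname{span}\operatorname{Tan}(A,x)=d$. For a unit vector $u$ and $f:u^\perp\to\mathbb{R}$, $\operatorname{hyp}_uf=\{w+tu:w\in u^\perp,\ t\leq f(w)\}$. $f$ is semiconcave if $w\mapsto f(w)-\frac c2|w|^2$ is concave on $u^\perp$ for some $c\geq0$. A convex body is a compact convex set with nonempty interior. A $C^{1,1}$-diffeomorphism is a bijection between open sets such that it and its inverse have Lipschitz derivatives. $N\subset A$ is a neighbourhood of $a$ in $A$ if $A\cap B(a,\delta)\subset N$ for some $\delta>0$. *)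

theory Defs
  imports "HOL-Analysis.Analysis"
begin

definition positive_reach :: "'a::euclidean_space set \<Rightarrow> bool" where
  "positive_reach A \<longleftrightarrow> (\<exists>\<epsilon>>0. \<forall>x. infdist x A < \<epsilon> \<longrightarrow>
      (\<exists>!p. p \<in> A \<and> (\<forall>q\<in>A. dist x p \<le> dist x q)))"

definition Tan :: "'a::euclidean_space set \<Rightarrow> 'a \<Rightarrow> 'a set" where
  "Tan A x = {u. u = 0 \<or> (\<exists>xs r. (\<forall>i. xs i \<in> A \<and> xs i \<noteq> x) \<and> xs \<longlonglongrightarrow> x \<and>
      (\<forall>i. r i > (0::real)) \<and> (\<lambda>i. r i *\<^sub>R (xs i - x)) \<longlonglongrightarrow> u)}"

definition T_dim :: "'a::euclidean_space set \<Rightarrow> nat \<Rightarrow> 'a set" where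
  "T_dim A d = {x \<in> A. dim (span (Tan A x)) = d}"

definition perp :: "'a::euclidean_space \<Rightarrow> 'a set" where
  "perp u = {w. w \<bullet> u = 0}"

definition hyp :: "'a::euclidean_space \<Rightarrow> ('a \<Rightarrow> real) \<Rightarrow> 'a set" where
  "hyp u f = {w + t *\<^sub>R u | w t. w \<in> perp u \<and> t \<le> f w}"

definition semiconcave :: "'a::euclidean_space \<Rightarrow> ('a \<Rightarrow> real) \<Rightarrow> bool" where
  "semiconcave u f \<longleftrightarrow> (\<exists>c\<ge>0. concave_on (perp u) (\<lambda>w. f w - c / 2 * (norm w)\<^sup>2))"

definition convex_body :: "'a::euclidean_space set \<Rightarrow> bool" where
  "convex_body K \<longleftrightarrow> compact K \<and> convex K \<and> interior K \<noteq> {}"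

definition C11_diffeo :: "('a::euclidean_space \<Rightarrow> 'a) \<Rightarrow> 'a set \<Rightarrow> 'a set \<Rightarrow> bool" where
  "C11_diffeo \<Phi> U V \<longleftrightarrow> open U \<and> open V \<and> bij_betw \<Phi> U V \<and>
     (\<exists>D. (\<forall>x\<in>U. (\<Phi> has_derivative blinfun_apply (D x)) (at x)) \<and> (\<exists>L. L-lipschitz_on U D)) \<and>
     (\<exists>E. (\<forall>y\<in>V. (inv_into U \<Phi> has_derivative blinfun_apply (E y)) (at y)) \<and> (\<exists>L. L-lipschitz_on V E))"

definition nbhd_in :: "'a::metric_space set \<Rightarrow> 'a set \<Rightarrow> 'a \<Rightarrow> bool" where
  "nbhd_in N A a \<longleftrightarrow> N \<subseteq> A \<and> (\<exists>\<delta>>0. A \<inter> ball a \<delta> \<subseteq> N)"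

end

theory Submission
  imports Defs
begin

text \<open>
  If the reach of \<open>A\<close> is at least \<open>\<epsilon>\<close>, then by Federer's ray lemma (proved here with Brouwer's
  fixed point theorem) every outer normal \<open>v\<close> at a point \<open>q\<close> of \<open>A\<close> carries a free ball: the open
  ball of any radius \<open>r < \<epsilon>\<close> centred at \<open>q + r v\<close> misses \<open>A\<close>. Free balls at \<open>a\<close> force the tangent
  cone into the half-space \<open>v \<bullet> w \<le> 0\<close>; as the tangent cone spans, some direction \<open>u\<close> has
  inner product bounded below by some \<open>c > 0\<close> with all normals of free balls near \<open>a\<close>. Over the
  hyperplane \<open>u\<^sup>\<bottom>\<close>, each free ball yields a barrier, the tangent hyperplane at its foot point
  plus a quadratic term of fixed curvature \<open>K\<close>. Near \<open>a\<close>, \<open>A\<close> lies below all barriers while every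
  point outside \<open>A\<close> lies above the barrier of its own nearest point, so \<open>A\<close> is locally the
  hypograph of the infimum \<open>f\<close> of the barriers, which is Lipschitz and \<open>K\<close>-semiconcave. Finally
  the shear \<open>x \<mapsto> x + K |x'|\<^sup>2 u\<close> (\<open>x'\<close> the component orthogonal to \<open>u\<close>) maps a truncated
  hypograph of the concave function \<open>f - K |\<cdot>|\<^sup>2\<close>, a convex body, onto a neighbourhood of \<open>a\<close>
  in \<open>A\<close>.
\<close>

section \<open>Decomposition along a unit vector\<close>

definition perp_proj :: "'a::real_inner \<Rightarrow> 'a \<Rightarrow> 'a" where
  "perp_proj u x = x - (x \<bullet> u) *\<^sub>R u"

lemma bounded_linear_perp_proj: "bounded_linear (perp_proj u)"
  unfolding perp_proj_def[abs_def]
  by (intro bounded_linear_sub bounded_linear_ident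
      bounded_linear_compose[OF bounded_linear_scaleR_left bounded_linear_inner_left])

lemma perp_proj_add: "perp_proj u (x + y) = perp_proj u x + perp_proj u y"
  and perp_proj_diff: "perp_proj u (x - y) = perp_proj u x - perp_proj u y"
  and perp_proj_scaleR: "perp_proj u (c *\<^sub>R x) = c *\<^sub>R perp_proj u x"
  by (simp_all add: perp_proj_def inner_add_left inner_diff_left algebra_simps)

lemma power2_norm_add:
  fixes x y :: "'a::real_inner"
  shows "(norm (x + y))\<^sup>2 = (norm x)\<^sup>2 + 2 * (x \<bullet> y) + (norm y)\<^sup>2"
  using dot_norm[of x y] by simp

lemma perp_proj_decomp: "perp_proj u x + (x \<bullet> u) *\<^sub>R u = x"
  by (simp add: perp_proj_def)

lemma inner_perp_proj: "v \<bullet> perp_proj u x = v \<bullet> x - (x \<bullet> u) * (v \<bullet> u)"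
  by (simp add: perp_proj_def inner_diff_right)

context
  fixes u :: "'a::euclidean_space"
  assumes unit: "norm u = 1"
begin

lemma inner_unit_self: "u \<bullet> u = 1"
  using unit by (simp add: norm_eq_1)

lemma perp_proj_inner_unit: "perp_proj u x \<bullet> u = 0"
  by (simp add: perp_proj_def inner_diff_left inner_unit_self)

lemma perp_proj_in_perp: "perp_proj u x \<in> perp u"
  by (simp add: perp_def perp_proj_inner_unit)

lemma perp_proj_add_scaleR_unit: "perp_proj u (x + c *\<^sub>R u) = perp_proj u x"
  by (simp add: perp_proj_def inner_add_left inner_unit_self algebra_simps)

lemma norm_sq_perp_proj: "(norm x)\<^sup>2 = (norm (perp_proj u x))\<^sup>2 + (x \<bullet> u)\<^sup>2"
proof -
  have "orthogonal (perp_proj u x) ((x \<bullet> u) *\<^sub>R u)"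
    by (simp add: orthogonal_def perp_proj_inner_unit)
  from norm_add_Pythagorean[OF this] show ?thesis
    using unit by (simp add: perp_proj_decomp power_mult_distrib)
qed

lemma norm_perp_proj_le: "norm (perp_proj u x) \<le> norm x"
  by (rule power2_le_imp_le) (use norm_sq_perp_proj[of x] in auto)

lemma norm_le_perp_proj_add: "norm x \<le> norm (perp_proj u x) + \<bar>x \<bullet> u\<bar>"
  using norm_triangle_ineq[of "perp_proj u x" "(x \<bullet> u) *\<^sub>R u"] unit
  by (simp add: perp_proj_decomp)

lemma abs_inner_unit_le: "\<bar>x \<bullet> u\<bar> \<le> norm x"
  using Cauchy_Schwarz_ineq2[of x u] unit by simp

lemma mem_hyp_iff: "y \<in> hyp u f \<longleftrightarrow> y \<bullet> u \<le> f (perp_proj u y)"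
proof
  assume "y \<in> hyp u f"
  then obtain w t where y: "y = w + t *\<^sub>R u" and "w \<bullet> u = 0" "t \<le> f w"
    by (auto simp: hyp_def perp_def)
  then have "y \<bullet> u = t" "perp_proj u y = w"
    by (simp_all add: inner_add_left inner_unit_self perp_proj_def)
  then show "y \<bullet> u \<le> f (perp_proj u y)"
    using \<open>t \<le> f w\<close> by simp
next
  assume "y \<bullet> u \<le> f (perp_proj u y)"
  then show "y \<in> hyp u f"
    unfolding hyp_def using perp_proj_decomp[of u y] perp_proj_in_perp[of y]
    by (intro CollectI exI conjI) auto
qed

end

lemma convex_perp: "convex (perp (u::'a::euclidean_space))"
  using convex_hyperplane[of u 0] by (simp add: perp_def inner_commute)

section \<open>Metric projection onto a set of positive reach\<close>

lemma dist_closest_point_eq_infdist: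
  "closed S \<Longrightarrow> S \<noteq> {} \<Longrightarrow> dist x (closest_point S x) = infdist x S"
  by (simp add: infdist_eq_setdist setdist_closest_point)

lemma nearest_point_of_limit:
  fixes A :: "'a::euclidean_space set"
  assumes A: "closed A" "A \<noteq> {}" and lim: "X \<longlonglongrightarrow> x" "(\<lambda>n. closest_point A (X n)) \<longlonglongrightarrow> l"
  shows "l \<in> A" "\<forall>q\<in>A. dist x l \<le> dist x q"
proof -
  show "l \<in> A"
    using closed_sequentially[OF A(1) _ lim(2)] closest_point_in_set[OF A] by blast
  have "dist x l \<le> dist x q" if "q \<in> A" for q
  proof (rule LIMSEQ_le)
    show "(\<lambda>n. dist (X n) (closest_point A (X n))) \<longlonglongrightarrow> dist x l"
      using lim by (intro tendsto_intros)
    show "(\<lambda>n. dist (X n) q) \<longlonglongrightarrow> dist x q"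
      using lim by (intro tendsto_intros)
    show "\<exists>N. \<forall>n\<ge>N. dist (X n) (closest_point A (X n)) \<le> dist (X n) q"
      using closest_point_le[OF A(1) that] by blast
  qed
  then show "\<forall>q\<in>A. dist x l \<le> dist x q"
    by blast
qed

lemma continuous_on_closest_point_unique:
  fixes A :: "'a::euclidean_space set"
  assumes A: "closed A" "A \<noteq> {}"
    and unique: "\<And>x. x \<in> S \<Longrightarrow> \<exists>!p. p \<in> A \<and> (\<forall>q\<in>A. dist x p \<le> dist x q)"
  shows "continuous_on S (closest_point A)"
proof (rule continuous_on_sequentiallyI)
  fix X x assume "\<forall>n. X n \<in> S" and "x \<in> S" and lim: "X \<longlonglongrightarrow> x"
  let ?P = "closest_point A"
  show "(\<lambda>n. ?P (X n)) \<longlonglongrightarrow> ?P x"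
  proof (rule ccontr)
    assume "\<not> ?thesis"
    then obtain e where "e > 0"
      and not_ev: "\<not> eventually (\<lambda>n. dist (?P (X n)) (?P x) < e) sequentially"
      unfolding tendsto_iff by blast
    obtain r :: "nat \<Rightarrow> nat" where r: "strict_mono r" and "\<forall>n. \<not> dist (?P (X (r n))) (?P x) < e"
      using not_eventually_sequentiallyD[OF not_ev] by blast
    then have far: "\<And>n. e \<le> dist (?P (X (r n))) (?P x)"
      by (simp add: not_less)
    have "bounded (range X)"
      using lim by (rule convergent_imp_bounded)
    then obtain B where B: "\<And>n. dist (X n) x \<le> B"
      unfolding bounded_any_center[of _ x] by (auto simp: dist_commute)
    let ?K = "A \<inter> cball x (2 * B + dist x (?P x))"
    have inK: "?P (X (r n)) \<in> ?K" for n
    proof -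
      have "dist (X (r n)) (?P (X (r n))) \<le> dist (X (r n)) (?P x)"
        using closest_point_le[OF A(1) closest_point_in_set[OF A]] .
      then have "dist x (?P (X (r n))) \<le> 2 * dist (X (r n)) x + dist x (?P x)"
        by (smt (verit) dist_commute dist_triangle)
      then show ?thesis
        using B[of "r n"] closest_point_in_set[OF A] by auto
    qed
    have "seq_compact ?K"
      using A(1) by (simp add: closed_Int_compact compact_imp_seq_compact)
    then obtain l s where s: "strict_mono s" and "((\<lambda>n. ?P (X (r n))) \<circ> s) \<longlonglongrightarrow> l"
      using seq_compactE[of ?K "\<lambda>n. ?P (X (r n))"] inK by blast
    then have lim_s: "(\<lambda>n. ?P (X (r (s n)))) \<longlonglongrightarrow> l"
      by (simp add: comp_def)
    have "(\<lambda>n. X (r (s n))) \<longlonglongrightarrow> x"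
      using LIMSEQ_subseq_LIMSEQ[OF LIMSEQ_subseq_LIMSEQ[OF lim r] s] by (simp add: comp_def)
    then have "l = ?P x"
      using nearest_point_of_limit[OF A _ lim_s] unique[OF \<open>x \<in> S\<close>] closest_point_exists[OF A, of x]
      by (elim ex1E) blast
    moreover have "e \<le> dist l (?P x)"
      by (rule LIMSEQ_le_const[OF tendsto_dist[OF lim_s tendsto_const]]) (use far in blast)
    ultimately show False
      using \<open>e > 0\<close> by simp
  qed
qed

locale reach_ge =
  fixes A :: "'a::euclidean_space set" and eps :: real
  assumes eps_pos: "0 < eps"
    and unique_nearest: "\<And>x. infdist x A < eps \<Longrightarrow> \<exists>!p. p \<in> A \<and> (\<forall>q\<in>A. dist x p \<le> dist x q)"
begin

lemma nonempty: "A \<noteq> {}"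
proof
  assume "A = {}"
  then have "infdist 0 A < eps"
    using eps_pos by (simp add: infdist_def)
  then show False
    using ex1_implies_ex[OF unique_nearest] \<open>A = {}\<close> by auto
qed

lemma closed: "closed A"
proof -
  have "x \<in> A" if "x \<in> closure A" for x
  proof -
    have "infdist x A = 0"
      using that nonempty in_closure_iff_infdist_zero by blast
    then obtain p where "p \<in> A" and p: "\<forall>q\<in>A. dist x p \<le> dist x q"
      using ex1_implies_ex[OF unique_nearest[of x]] eps_pos by auto
    have "dist x p \<le> infdist x A"
      using p nonempty by (simp add: infdist_notempty cINF_greatest)
    then show "x \<in> A"
      using \<open>p \<in> A\<close> \<open>infdist x A = 0\<close> by simp
  qed
  then show ?thesis
    using closure_subset_eq by blast
qed

lemma closest_point_eqI:
  assumes "infdist x A < eps" "p \<in> A" "\<And>q. q \<in> A \<Longrightarrow> dist x p \<le> dist x q"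
  shows "closest_point A x = p"
proof -
  have "\<forall>q\<in>A. dist x p \<le> dist x q"
    using assms(3) by blast
  then show ?thesis
    using unique_nearest[OF assms(1)] closest_point_exists[OF closed nonempty, of x] assms(2)
    by (elim ex1E) blast
qed

lemma closest_point_in: "closest_point A x \<in> A"
  by (rule closest_point_in_set[OF closed nonempty])

lemma dist_closest_point: "dist x (closest_point A x) = infdist x A"
  by (rule dist_closest_point_eq_infdist[OF closed nonempty])

lemma continuous_on_closest_point: "continuous_on {x. infdist x A < eps} (closest_point A)"
  by (rule continuous_on_closest_point_unique[OF closed nonempty]) (simp add: unique_nearest)

end

lemma positive_reach_iff_reach_ge: "positive_reach A \<longleftrightarrow> (\<exists>eps. reach_ge A eps)"
  unfolding positive_reach_def reach_ge_def by (rule refl)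

section \<open>Free balls\<close>

definition free_ball :: "'a::euclidean_space set \<Rightarrow> 'a \<Rightarrow> 'a \<Rightarrow> real \<Rightarrow> bool" where
  "free_ball A q v t \<longleftrightarrow> A \<inter> ball (q + t *\<^sub>R v) t = {}"

lemma free_ball_iff_dist: "free_ball A q v t \<longleftrightarrow> (\<forall>y\<in>A. t \<le> dist (q + t *\<^sub>R v) y)"
  by (auto simp: free_ball_def not_less)

lemma free_ball_iff_inner:
  assumes v: "norm v = 1" and t: "0 \<le> t"
  shows "free_ball A q v t \<longleftrightarrow> (\<forall>y\<in>A. 2 * t * (v \<bullet> (y - q)) \<le> (norm (y - q))\<^sup>2)"
proof -
  have "(dist (q + t *\<^sub>R v) y)\<^sup>2 = (norm (y - q))\<^sup>2 - 2 * t * (v \<bullet> (y - q)) + t\<^sup>2" for y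
  proof -
    have "dist (q + t *\<^sub>R v) y = norm ((q - y) + t *\<^sub>R v)"
      by (simp add: dist_norm algebra_simps)
    moreover have "(q - y) \<bullet> (t *\<^sub>R v) = - t * (v \<bullet> (y - q))"
      by (simp add: inner_diff_left inner_diff_right inner_commute algebra_simps)
    ultimately show ?thesis
      using power2_norm_add[of "q - y" "t *\<^sub>R v"] v
      by (simp add: norm_minus_commute power_mult_distrib)
  qed
  moreover have "t \<le> dist (q + t *\<^sub>R v) y \<longleftrightarrow> t\<^sup>2 \<le> (dist (q + t *\<^sub>R v) y)\<^sup>2" for y
    using t by (metis abs_le_square_iff abs_of_nonneg zero_le_dist)
  ultimately show ?thesis
    by (simp add: free_ball_iff_dist)
qed

lemma free_ball_mono:
  assumes "norm v = 1" "free_ball A q v t" "0 \<le> s" "s \<le> t"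
  shows "free_ball A q v s"
proof -
  have "dist (q + s *\<^sub>R v) (q + t *\<^sub>R v) = t - s"
    using assms by (simp add: dist_norm flip: scaleR_diff_left)
  then have "ball (q + s *\<^sub>R v) s \<subseteq> ball (q + t *\<^sub>R v) t"
    by (subst ball_subset_ball_iff) simp
  then show ?thesis
    using assms(2) by (auto simp: free_ball_def)
qed

lemma closed_free_ball_radii: "closed {t. free_ball A q v t}"
proof -
  have "{t. free_ball A q v t} = (\<Inter>y\<in>A. {t. t \<le> dist (q + t *\<^sub>R v) y})"
    by (auto simp: free_ball_iff_dist)
  then show ?thesis
    by (auto intro!: closed_INT closed_Collect_le continuous_intros)
qed

lemma free_ball_limit:
  assumes "Q \<longlonglongrightarrow> q" "V \<longlonglongrightarrow> v" "\<And>n. free_ball A (Q n) (V n) t"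
  shows "free_ball A q v t"
  unfolding free_ball_iff_dist
proof
  fix y assume "y \<in> A"
  show "t \<le> dist (q + t *\<^sub>R v) y"
    using assms \<open>y \<in> A\<close>
    by (intro LIMSEQ_le_const[of "\<lambda>n. dist (Q n + t *\<^sub>R V n) y"] tendsto_intros)
      (auto simp: free_ball_iff_dist)
qed

text \<open>Secants \<open>y - a\<close> satisfy \<open>2 r (v \<bullet> (y - a)) \<le> |y - a|\<^sup>2\<close>; after rescaling, the right-hand side
  vanishes in the limit.\<close>

lemma free_ball_inner_Tan_nonpos:
  assumes v: "norm v = 1" and r: "0 < r" and free: "free_ball A a v r" and w: "w \<in> Tan A a"
  shows "v \<bullet> w \<le> 0"
proof (cases "w = 0")
  case False
  then obtain xs rs where xs: "\<And>i. xs i \<in> A" "xs \<longlonglongrightarrow> a" and rs: "\<And>i. rs i > (0::real)"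
    and lim: "(\<lambda>i. rs i *\<^sub>R (xs i - a)) \<longlonglongrightarrow> w"
    using w unfolding Tan_def by blast
  define W where "W i = rs i *\<^sub>R (xs i - a)" for i
  have "v \<bullet> W i \<le> norm (W i) * norm (xs i - a) / (2 * r)" for i
  proof -
    have "2 * r * (v \<bullet> (xs i - a)) \<le> (norm (xs i - a))\<^sup>2"
      using free xs(1) free_ball_iff_inner[OF v] r by auto
    then have "rs i * (2 * r * (v \<bullet> (xs i - a))) \<le> rs i * (norm (xs i - a))\<^sup>2"
      using rs[of i] by (intro mult_left_mono) auto
    moreover have "v \<bullet> W i = rs i * (v \<bullet> (xs i - a))" "norm (W i) = rs i * norm (xs i - a)"
      using rs[of i] by (simp_all add: W_def)
    ultimately show ?thesis
      using r by (simp add: field_simps power2_eq_square)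
  qed
  moreover have "(\<lambda>i. v \<bullet> W i) \<longlonglongrightarrow> v \<bullet> w"
    using lim unfolding W_def by (intro tendsto_intros)
  moreover have "(\<lambda>i. norm (W i) * norm (xs i - a) / (2 * r)) \<longlonglongrightarrow> norm w * norm (a - a) / (2 * r)"
    using lim xs(2) r by (simp only: W_def) (intro tendsto_intros, auto)
  ultimately show ?thesis
    by (simp add: LIMSEQ_le)
qed simp

context reach_ge
begin

lemma closest_point_free_ball:
  assumes "q \<in> A" "norm v = 1" "0 \<le> t" "t < eps" "free_ball A q v t"
  shows "closest_point A (q + t *\<^sub>R v) = q"
    and "infdist (q + t *\<^sub>R v) A = t"
proof -
  have dq: "dist (q + t *\<^sub>R v) q = t"
    using assms by (simp add: dist_norm)
  then have "infdist (q + t *\<^sub>R v) A < eps"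
    using infdist_le[OF assms(1)] assms(4) by (metis le_less_trans)
  then show cp: "closest_point A (q + t *\<^sub>R v) = q"
    using assms dq by (intro closest_point_eqI) (auto simp: free_ball_iff_dist)
  show "infdist (q + t *\<^sub>R v) A = t"
    using dist_closest_point[of "q + t *\<^sub>R v"] cp dq by simp
qed

definition outer_normal :: "'a \<Rightarrow> 'a" where
  "outer_normal x = (x - closest_point A x) /\<^sub>R infdist x A"

lemma outer_normal:
  assumes "x \<notin> A"
  shows "norm (outer_normal x) = 1"
    and "closest_point A x + infdist x A *\<^sub>R outer_normal x = x"
    and "free_ball A (closest_point A x) (outer_normal x) (infdist x A)"
proof -
  have pos: "0 < infdist x A"
    using infdist_pos_not_in_closed[OF closed nonempty assms] .
  show "norm (outer_normal x) = 1"
    using pos dist_closest_point[of x] by (simp add: outer_normal_def dist_norm)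
  show eq: "closest_point A x + infdist x A *\<^sub>R outer_normal x = x"
    using pos by (simp add: outer_normal_def)
  show "free_ball A (closest_point A x) (outer_normal x) (infdist x A)"
    unfolding free_ball_iff_dist eq by (simp add: infdist_le)
qed

lemma continuous_on_outer_normal:
  "continuous_on {x. 0 < infdist x A \<and> infdist x A < eps} outer_normal"
  unfolding outer_normal_def
  by (intro continuous_intros continuous_on_subset[OF continuous_on_closest_point]) auto

end

lemma norm_add_scaleR_unit_sq:
  fixes x v :: "'a::real_inner"
  assumes "norm v = 1"
  shows "(norm (x + h *\<^sub>R v))\<^sup>2 = (norm x)\<^sup>2 + 2 * h * (x \<bullet> v) + h\<^sup>2"
  using power2_norm_add[of x "h *\<^sub>R v"] assms by (simp add: power_mult_distrib)

lemma norm_add_scaleR_unit_ge: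
  fixes x v :: "'a::real_inner"
  assumes "norm v = 1" "\<tau> \<le> norm x" "\<tau> / 2 \<le> x \<bullet> v" "0 \<le> \<tau>" "0 \<le> h"
  shows "\<tau> + h / 3 \<le> norm (x + h *\<^sub>R v)"
proof (rule power2_le_imp_le)
  have "\<tau>\<^sup>2 \<le> (norm x)\<^sup>2"
    using assms by (simp add: power_mono)
  moreover have "h * \<tau> \<le> 2 * h * (x \<bullet> v)"
    using assms mult_left_mono[of "\<tau> / 2" "x \<bullet> v" "2 * h"] by simp
  moreover have "(\<tau> + h / 3)\<^sup>2 = \<tau>\<^sup>2 + 2 / 3 * (h * \<tau>) + 1 / 9 * (h * h)"
    by (simp add: power2_eq_square algebra_simps)
  moreover have "0 \<le> h * \<tau>" "0 \<le> h * h"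
    using assms by simp_all
  ultimately show "(\<tau> + h / 3)\<^sup>2 \<le> (norm (x + h *\<^sub>R v))\<^sup>2"
    using norm_add_scaleR_unit_sq[OF assms(1), of x h] unfolding power2_eq_square by linarith
qed simp

lemma norm_less_add_scaleR_unit:
  fixes x v :: "'a::real_inner"
  assumes "norm v = 1" "0 < x \<bullet> v" "0 < h"
  shows "norm x < norm (x + h *\<^sub>R v)"
proof (rule power2_less_imp_less)
  have "0 < 2 * h * (x \<bullet> v) + h\<^sup>2"
    using assms by (simp add: add_pos_pos)
  then show "(norm x)\<^sup>2 < (norm (x + h *\<^sub>R v))\<^sup>2"
    using assms by (simp add: norm_add_scaleR_unit_sq)
qed simp

context reach_ge
begin

lemma isCont_closest_point_outer_normal:
  assumes "x \<notin> A" "infdist x A < eps"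
  shows "isCont (closest_point A) x" "isCont outer_normal x"
proof -
  let ?S = "{x. 0 < infdist x A \<and> infdist x A < eps}"
  have "open ?S"
    by (intro open_Collect_conj open_Collect_less continuous_intros)
  moreover have "x \<in> ?S"
    using assms infdist_pos_not_in_closed[OF closed nonempty] by auto
  ultimately show "isCont (closest_point A) x" "isCont outer_normal x"
    using continuous_on_outer_normal
      continuous_on_subset[OF continuous_on_closest_point, of ?S]
    by (auto simp: continuous_on_eq_continuous_at)
qed

lemma ray_end_neighbourhood:
  assumes q: "q \<in> A" and v: "norm v = 1" and \<tau>: "0 < \<tau>" "\<tau> < eps" and free: "free_ball A q v \<tau>"
  obtains d where "0 < d" "\<And>z. dist z (q + \<tau> *\<^sub>R v) < d \<Longrightarrow>
    infdist z A < eps \<and> dist (closest_point A z) q < \<tau> / 2 \<and> dist (outer_normal z) v < 1 / 5"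
proof -
  define z0 where "z0 = q + \<tau> *\<^sub>R v"
  have cp_z0: "closest_point A z0 = q" and d_z0: "infdist z0 A = \<tau>"
    using closest_point_free_ball[OF q v _ \<tau>(2) free] \<tau> by (simp_all add: z0_def)
  have "z0 \<notin> A"
    using d_z0 \<tau> by auto
  have n_z0: "outer_normal z0 = v"
    using \<tau> unfolding outer_normal_def cp_z0 d_z0 by (simp add: z0_def)
  have "\<forall>\<^sub>F z in nhds z0. infdist z A < eps \<and> dist (closest_point A z) q < \<tau> / 2
      \<and> dist (outer_normal z) v < 1 / 5"
  proof (intro eventually_conj)
    have "open {z. infdist z A < eps}"
      by (intro open_Collect_less continuous_intros)
    then show "\<forall>\<^sub>F z in nhds z0. infdist z A < eps"
      using eventually_nhds_in_open[of _ z0] d_z0 \<tau> by fastforce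
    show "\<forall>\<^sub>F z in nhds z0. dist (closest_point A z) q < \<tau> / 2"
      using isCont_closest_point_outer_normal(1)[OF \<open>z0 \<notin> A\<close>] d_z0 \<tau> cp_z0
      by (intro tendstoD) (auto simp: isCont_def tendsto_at_iff_tendsto_nhds)
    show "\<forall>\<^sub>F z in nhds z0. dist (outer_normal z) v < 1 / 5"
      using isCont_closest_point_outer_normal(2)[OF \<open>z0 \<notin> A\<close>] d_z0 \<tau> n_z0
      by (intro tendstoD) (auto simp: isCont_def tendsto_at_iff_tendsto_nhds)
  qed
  then show thesis
    using that unfolding eventually_nhds_metric z0_def by blast
qed

lemma infdist_beyond_ray_end:
  assumes q: "q \<in> A" and v: "norm v = 1" and \<tau>: "0 < \<tau>" "\<tau> < eps" and free: "free_ball A q v \<tau>"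
    and h: "0 \<le> h" and foot: "norm (q - closest_point A (q + (\<tau> + h) *\<^sub>R v)) < \<tau> / 2"
  shows "\<tau> + h / 3 \<le> infdist (q + (\<tau> + h) *\<^sub>R v) A" "infdist (q + (\<tau> + h) *\<^sub>R v) A \<le> \<tau> + h"
proof -
  let ?c = "q + (\<tau> + h) *\<^sub>R v" and ?z0 = "q + \<tau> *\<^sub>R v"
  let ?p = "closest_point A ?c"
  have "\<tau> \<le> norm (?z0 - ?p)"
    using closest_point_free_ball(2)[OF q v _ \<tau>(2) free] \<tau> infdist_le[OF closest_point_in, of ?z0]
    by (simp add: dist_norm)
  moreover have "(?z0 - ?p) \<bullet> v = (q - ?p) \<bullet> v + \<tau>"
    using v by (simp add: inner_add_left inner_diff_left norm_eq_1)
  ultimately have "\<tau> + h / 3 \<le> norm (?z0 - ?p + h *\<^sub>R v)"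
    using Cauchy_Schwarz_ineq2[of "q - ?p" v] v h \<tau> foot
    by (intro norm_add_scaleR_unit_ge) (auto simp: abs_le_iff)
  then show "\<tau> + h / 3 \<le> infdist ?c A"
    using dist_closest_point[of ?c] by (simp add: dist_norm algebra_simps)
  show "infdist ?c A \<le> \<tau> + h"
    using infdist_le[OF q, of ?c] v h \<tau> by (simp add: dist_norm)
qed

text \<open>The Brouwer step of Federer's argument: beyond the end \<open>q + \<tau> v\<close> of a free segment, the map
  \<open>z \<mapsto> \<xi> z + \<tau> \<nu> z + (d z - \<tau>) v\<close> (foot \<open>\<xi>\<close>, outer normal \<open>\<nu>\<close>, distance \<open>d\<close>) moves the points
  of a small ball by at most its radius, so it hits the centre \<open>q + (\<tau> + h) v\<close>.\<close>

lemma free_ball_centre_on_ray: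
  assumes q: "q \<in> A" and v: "norm v = 1" and \<tau>: "0 < \<tau>" "\<tau> < eps"
    and free: "free_ball A q v \<tau>" and H: "0 < H"
  obtains h p n s where "0 < h" "h \<le> H" "h \<le> \<tau>" "p \<in> A" "norm n = 1" "\<tau> < s" "s \<le> \<tau> + 5/4 * h"
    "free_ball A p n s" "norm (q - p) < \<tau> / 2" "p + \<tau> *\<^sub>R n = q + (2 * \<tau> + h - s) *\<^sub>R v"
proof -
  obtain d where "0 < d" and near: "\<And>z. dist z (q + \<tau> *\<^sub>R v) < d \<Longrightarrow>
      infdist z A < eps \<and> dist (closest_point A z) q < \<tau> / 2 \<and> dist (outer_normal z) v < 1 / 5"
    using ray_end_neighbourhood[OF q v \<tau> free] by blast
  define h where "h = min H (min (d / 3) \<tau>)"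
  have h: "0 < h" "h \<le> H" "h \<le> d / 3" "h \<le> \<tau>"
    using H \<open>0 < d\<close> \<tau> by (auto simp: h_def)
  define c where "c = q + (\<tau> + h) *\<^sub>R v"
  have near_ball: "dist z (q + \<tau> *\<^sub>R v) < d" if "z \<in> cball c (h / 4)" for z
    using that h dist_triangle[of z "q + \<tau> *\<^sub>R v" c] v
    by (simp add: c_def dist_norm norm_minus_commute algebra_simps)
  have "norm (q - closest_point A c) < \<tau> / 2"
    using near[OF near_ball[of c]] h by (simp add: dist_norm norm_minus_commute)
  then have d_ball: "\<tau> + h / 12 \<le> infdist z A \<and> infdist z A \<le> \<tau> + 5/4 * h"
    if "z \<in> cball c (h / 4)" for z
    using infdist_beyond_ray_end[OF q v \<tau> free, of h] infdist_triangle_abs[of z A c] that h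
    by (auto simp: c_def dist_commute)
  have out: "z \<notin> A" "infdist z A < eps" if "z \<in> cball c (h / 4)" for z
    using d_ball[OF that] near[OF near_ball[OF that]] h \<tau> by auto
  define M where "M z = closest_point A z + \<tau> *\<^sub>R outer_normal z + (infdist z A - \<tau>) *\<^sub>R v" for z
  have "norm (z - M z) \<le> h / 4" if z: "z \<in> cball c (h / 4)" for z
  proof -
    have "z - M z = (closest_point A z + infdist z A *\<^sub>R outer_normal z) - M z"
      using outer_normal(2)[OF out(1)[OF z]] by simp
    also have "\<dots> = (infdist z A - \<tau>) *\<^sub>R (outer_normal z - v)"
      by (simp add: M_def algebra_simps)
    finally have "norm (z - M z) = \<bar>infdist z A - \<tau>\<bar> * norm (outer_normal z - v)"
      by simp
    also have "\<dots> \<le> (5/4 * h) * (1 / 5)"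
      using d_ball[OF z] near[OF near_ball[OF z]] h by (intro mult_mono) (auto simp: dist_norm)
    finally show ?thesis
      by simp
  qed
  then have "c + (z - M z) \<in> cball c (h / 4)" if "z \<in> cball c (h / 4)" for z
    using that by (simp add: dist_norm norm_minus_commute)
  moreover have "continuous_on (cball c (h / 4)) M"
  proof (intro continuous_at_imp_continuous_on ballI)
    fix z assume "z \<in> cball c (h / 4)"
    with out show "isCont M z"
      unfolding M_def by (intro continuous_intros isCont_closest_point_outer_normal)
  qed
  ultimately obtain z where z: "z \<in> cball c (h / 4)" and "M z = c"
    using brouwer_surjective_cball[of c "h / 4" M c "{c}"] h by auto
  show thesis
  proof (rule that[of h "closest_point A z" "outer_normal z" "infdist z A"])
    show "closest_point A z + \<tau> *\<^sub>R outer_normal z = q + (2 * \<tau> + h - infdist z A) *\<^sub>R v"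
      using \<open>M z = c\<close> by (simp add: M_def c_def algebra_simps flip: scaleR_2)
    show "norm (q - closest_point A z) < \<tau> / 2"
      using near[OF near_ball[OF z]] by (simp add: dist_norm norm_minus_commute)
    show "free_ball A (closest_point A z) (outer_normal z) (infdist z A)"
      and "norm (outer_normal z) = 1"
      using outer_normal[OF out(1)[OF z]] by simp_all
    show "\<tau> < infdist z A" "infdist z A \<le> \<tau> + 5 / 4 * h"
      using d_ball[OF z] h by auto
  qed (use h closest_point_in in auto)
qed

end

context reach_ge
begin

lemma free_ball_step:
  assumes q: "q \<in> A" and v: "norm v = 1" and \<tau>: "0 < \<tau>" "\<tau> < eps"
    and free: "free_ball A q v \<tau>" and H: "0 < H"
  obtains h where "0 < h" "h \<le> H" "free_ball A q v (\<tau> + h)"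
proof -
  obtain h p n s where h: "0 < h" "h \<le> H" "h \<le> \<tau>" and p: "p \<in> A" and n: "norm n = 1"
    and s: "\<tau> < s" "s \<le> \<tau> + 5/4 * h" and free_s: "free_ball A p n s"
    and pq: "norm (q - p) < \<tau> / 2" and centre: "p + \<tau> *\<^sub>R n = q + (2 * \<tau> + h - s) *\<^sub>R v"
    using free_ball_centre_on_ray[OF q v \<tau> free H] by blast
  define l where "l = 2 * \<tau> + h - s"
  have "0 < l"
    using h s by (simp add: l_def)
  have cp_p: "closest_point A (p + \<tau> *\<^sub>R n) = p"
    using closest_point_free_ball(1)[OF p n _ \<tau>(2) free_ball_mono[OF n free_s]] \<tau> s by simp
  show thesis
  proof (cases "l \<le> \<tau>")
    case True
    have "closest_point A (q + l *\<^sub>R v) = q"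
      using closest_point_free_ball(1)[OF q v _ _ free_ball_mono[OF v free]] \<open>0 < l\<close> True \<tau> by simp
    then have "p = q"
      using cp_p centre by (simp add: l_def)
    then have eq: "\<tau> *\<^sub>R n = l *\<^sub>R v"
      using centre by (simp add: l_def)
    then have "norm (\<tau> *\<^sub>R n) = norm (l *\<^sub>R v)"
      by simp
    then have "\<bar>\<tau>\<bar> = \<bar>l\<bar>"
      using n v by simp
    then have "\<tau> = l"
      using \<tau> \<open>0 < l\<close> by simp
    then have "n = v" "s = \<tau> + h"
      using eq \<tau> by (simp, simp add: l_def)
    then show thesis
      using that h free_s \<open>p = q\<close> by simp
  next
    case False
    let ?x = "q + \<tau> *\<^sub>R v - p"
    have "\<tau> \<le> norm ?x"
      using closest_point_free_ball(2)[OF q v _ \<tau>(2) free] \<tau> infdist_le[OF p, of "q + \<tau> *\<^sub>R v"]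
      by (simp add: dist_norm)
    also have "norm ?x < norm (?x + (l - \<tau>) *\<^sub>R v)"
    proof (rule norm_less_add_scaleR_unit[OF v])
      have "?x \<bullet> v = (q - p) \<bullet> v + \<tau>"
        using v by (simp add: inner_add_left inner_diff_left norm_eq_1)
      then show "0 < ?x \<bullet> v"
        using Cauchy_Schwarz_ineq2[of "q - p" v] v pq by (simp add: abs_le_iff)
    qed (use False in simp)
    also have "?x + (l - \<tau>) *\<^sub>R v = \<tau> *\<^sub>R n"
      using centre by (simp add: l_def algebra_simps flip: scaleR_2)
    finally show thesis
      using n \<tau> by simp
  qed
qed

lemma free_ball_extends:
  assumes q: "q \<in> A" and v: "norm v = 1" and T: "0 < T" "free_ball A q v T"
    and R: "0 \<le> R" "R < eps"
  shows "free_ball A q v R"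
proof (cases "R \<le> T")
  case True
  then show ?thesis
    using free_ball_mono[OF v T(2) R(1)] by simp
next
  case False
  define S where "S = {t. free_ball A q v t} \<inter> {0..R}"
  have "T \<in> S" "bdd_above S"
    using T False by (auto simp: S_def)
  moreover have "closed S"
    unfolding S_def by (intro closed_Int closed_free_ball_radii closed_atLeastAtMost)
  ultimately have "Sup S \<in> S" and T_le: "T \<le> Sup S"
    using closed_contains_Sup cSup_upper by blast+
  then have free_sup: "free_ball A q v (Sup S)" and "Sup S \<le> R"
    by (auto simp: S_def)
  show ?thesis
  proof (rule ccontr)
    assume "\<not> free_ball A q v R"
    then have "Sup S < R"
      using free_sup \<open>Sup S \<le> R\<close> by (cases "Sup S = R") auto
    then obtain h where "0 < h" "h \<le> R - Sup S" "free_ball A q v (Sup S + h)"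
      using free_ball_step[OF q v _ _ free_sup, of "R - Sup S"] T(1) T_le R by auto
    then have "Sup S + h \<in> S"
      using T(1) T_le by (simp add: S_def)
    then show False
      using cSup_upper[OF _ \<open>bdd_above S\<close>] \<open>0 < h\<close> by fastforce
  qed
qed

lemma free_ball_outer_normal:
  assumes "x \<notin> A" "infdist x A < eps" "0 \<le> r" "r < eps"
  shows "free_ball A (closest_point A x) (outer_normal x) r"
  using free_ball_extends[OF closest_point_in outer_normal(1)[OF assms(1)] _ outer_normal(3)[OF assms(1)]]
    assms infdist_pos_not_in_closed[OF closed nonempty assms(1)]
  by simp

end

section \<open>A direction of uniform positivity\<close>

lemma exists_unit_positive_on_polar:
  fixes T :: "'a::euclidean_space set"
  assumes "span T = UNIV"
  obtains u where "norm u = 1" "\<And>v. v \<noteq> 0 \<Longrightarrow> (\<forall>w\<in>T. v \<bullet> w \<le> 0) \<Longrightarrow> 0 < v \<bullet> u"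
proof -
  obtain B where B: "B \<subseteq> T" "independent B" "T \<subseteq> span B"
    by (rule maximal_independent_subset)
  have "finite B"
    using B(2) by (rule independent_imp_finite)
  have span_B: "span B = UNIV"
    using B(3) assms by (metis span_mono span_span top.extremum_uniqueI)
  define u' where "u' = - sum id B"
  have pos: "0 < v \<bullet> u'" if "v \<noteq> 0" "\<forall>w\<in>T. v \<bullet> w \<le> 0" for v
  proof -
    have nonneg: "\<forall>b\<in>B. 0 \<le> - (v \<bullet> b)"
      using that B(1) by auto
    have eq: "v \<bullet> u' = (\<Sum>b\<in>B. - (v \<bullet> b))"
      by (simp add: u'_def inner_sum_right sum_negf)
    have "v \<bullet> u' \<noteq> 0"
    proof
      assume "v \<bullet> u' = 0"
      then have "\<forall>b\<in>B. orthogonal v b"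
        using sum_nonneg_eq_0_iff[OF \<open>finite B\<close>, of "\<lambda>b. - (v \<bullet> b)"] nonneg eq
        by (simp add: orthogonal_def)
      then have "orthogonal v v"
        using orthogonal_to_span[of v B v] span_B by auto
      then show False
        using \<open>v \<noteq> 0\<close> by (simp add: orthogonal_def)
    qed
    moreover have "0 \<le> v \<bullet> u'"
      using eq nonneg by (simp add: sum_nonneg)
    ultimately show ?thesis
      by simp
  qed
  show thesis
  proof (cases "u' = 0")
    case True
    obtain b :: 'a where "b \<in> Basis"
      using nonempty_Basis by blast
    then have "norm b = 1"
      by simp
    moreover have "0 < v \<bullet> b" if "v \<noteq> 0" "\<forall>w\<in>T. v \<bullet> w \<le> 0" for v
      using pos[OF that] True by simp
    ultimately show thesis
      by (rule that)
  next
    case False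
    then show thesis
      using that[of "u' /\<^sub>R norm u'"] pos by simp
  qed
qed

text \<open>The normals of free balls of a fixed radius depend upper semicontinuously on the foot
  point, so a strict inequality at \<open>a\<close> persists with a uniform margin nearby.\<close>

lemma uniform_free_ball_normal_bound:
  fixes A :: "'a::euclidean_space set"
  assumes pos: "\<And>v. norm v = 1 \<Longrightarrow> free_ball A a v r \<Longrightarrow> 0 < v \<bullet> u"
  obtains \<rho> c where "0 < \<rho>" "0 < c"
    "\<And>q v. norm (q - a) \<le> \<rho> \<Longrightarrow> norm v = 1 \<Longrightarrow> free_ball A q v r \<Longrightarrow> c \<le> v \<bullet> u"
proof (rule ccontr)
  assume "\<not> thesis"
  then have "\<forall>n::nat. \<exists>q v. norm (q - a) \<le> 1 / Suc n \<and> norm v = 1 \<and> free_ball A q v r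
      \<and> v \<bullet> u < 1 / Suc n"
    using that by (metis not_le of_nat_0_less_iff zero_less_Suc zero_less_divide_1_iff)
  then obtain Q V where QV: "\<And>n. norm (Q n - a) \<le> 1 / Suc n" "\<And>n. norm (V n) = 1"
    "\<And>n. free_ball A (Q n) (V n) r" "\<And>n. V n \<bullet> u < 1 / Suc n"
    by metis
  have "seq_compact (sphere (0::'a) 1)"
    by (intro compact_imp_seq_compact compact_sphere)
  then obtain l s where l: "l \<in> sphere 0 1" and s: "strict_mono s" and lim_V: "(V \<circ> s) \<longlonglongrightarrow> l"
    using QV(2) seq_compactE[of "sphere 0 1" V] by auto
  have inv: "(\<lambda>n. 1 / real (Suc n)) \<longlonglongrightarrow> 0"
    using LIMSEQ_inverse_real_of_nat by (simp add: inverse_eq_divide)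
  have "(\<lambda>n. Q n - a) \<longlonglongrightarrow> 0"
    using QV(1) by (intro Lim_null_comparison[OF _ inv] always_eventually) simp
  then have "(Q \<circ> s) \<longlonglongrightarrow> a"
    using LIMSEQ_subseq_LIMSEQ[OF _ s] by (simp add: LIM_zero_iff)
  then have "free_ball A a l r"
    using lim_V by (rule free_ball_limit) (simp add: QV(3))
  then have "0 < l \<bullet> u"
    using pos l by simp
  moreover have "l \<bullet> u \<le> 0"
  proof (rule LIMSEQ_le)
    show "(\<lambda>n. (V \<circ> s) n \<bullet> u) \<longlonglongrightarrow> l \<bullet> u"
      using lim_V by (intro tendsto_intros)
    show "(\<lambda>n. 1 / real (Suc (s n))) \<longlonglongrightarrow> 0"
      using LIMSEQ_subseq_LIMSEQ[OF inv s] by (simp add: comp_def)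
  qed (use QV(4) less_imp_le in auto)
  ultimately show False
    by simp
qed

lemma exists_uniform_direction:
  fixes A :: "'a::euclidean_space set"
  assumes "span (Tan A a) = UNIV" "0 < r"
  obtains u \<rho> c where "norm u = 1" "0 < \<rho>" "0 < c" "c \<le> 1"
    "\<And>q v. norm (q - a) \<le> \<rho> \<Longrightarrow> norm v = 1 \<Longrightarrow> free_ball A q v r \<Longrightarrow> c \<le> v \<bullet> u"
proof -
  obtain u where u: "norm u = 1" and pos: "\<And>v. v \<noteq> 0 \<Longrightarrow> (\<forall>w\<in>Tan A a. v \<bullet> w \<le> 0) \<Longrightarrow> 0 < v \<bullet> u"
    using exists_unit_positive_on_polar[OF assms(1)] by blast
  have "0 < v \<bullet> u" if "norm v = 1" "free_ball A a v r" for v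
  proof -
    have "v \<noteq> 0"
      using that(1) by auto
    then show ?thesis
      using pos free_ball_inner_Tan_nonpos[OF that(1) assms(2) that(2)] by blast
  qed
  then obtain \<rho> c where "0 < \<rho>" "0 < c"
    and c: "\<And>q v. norm (q - a) \<le> \<rho> \<Longrightarrow> norm v = 1 \<Longrightarrow> free_ball A q v r \<Longrightarrow> c \<le> v \<bullet> u"
    using uniform_free_ball_normal_bound by blast
  then show thesis
    using that[OF u \<open>0 < \<rho>\<close>, of "min c 1"] by force
qed

section \<open>Barriers and the hypograph representation\<close>

lemma convex_on_norm_sq:
  fixes S :: "'a::real_inner set"
  assumes "convex S"
  shows "convex_on S (\<lambda>w. (norm w)\<^sup>2)"
proof (rule convex_onI[OF _ assms])
  fix t :: real and x y :: 'a assume t: "0 < t" "t < 1"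
  define I D where "I = x \<bullet> (y - x)" and "D = (norm (y - x))\<^sup>2"
  have "(norm ((1 - t) *\<^sub>R x + t *\<^sub>R y))\<^sup>2 = (norm (x + t *\<^sub>R (y - x)))\<^sup>2"
    by (simp add: algebra_simps)
  also have "\<dots> = (norm x)\<^sup>2 + 2 * t * I + t\<^sup>2 * D"
    by (simp add: power2_norm_add power_mult_distrib I_def D_def)
  also have "\<dots> \<le> (norm x)\<^sup>2 + 2 * t * I + t * D"
    using t by (simp add: D_def power2_eq_square mult_right_mono)
  also have "\<dots> = (1 - t) * (norm x)\<^sup>2 + t * ((norm x)\<^sup>2 + 2 * I + D)"
    by (simp add: algebra_simps)
  also have "(norm x)\<^sup>2 + 2 * I + D = (norm y)\<^sup>2"
    using power2_norm_add[of x "y - x"] by (simp add: I_def D_def)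
  finally show "(norm ((1 - t) *\<^sub>R x + t *\<^sub>R y))\<^sup>2 \<le> (1 - t) * (norm x)\<^sup>2 + t * (norm y)\<^sup>2" .
qed

lemma concave_on_affine_inner:
  assumes "convex S"
  shows "concave_on S (\<lambda>w. c + a \<bullet> w)"
  unfolding concave_on_iff
proof (intro conjI ballI allI impI)
  fix x y and l m :: real assume "l + m = 1"
  have "l * (c + a \<bullet> x) + m * (c + a \<bullet> y) = (l + m) * c + a \<bullet> (l *\<^sub>R x + m *\<^sub>R y)"
    by (simp add: inner_add_right algebra_simps)
  then show "l * (c + a \<bullet> x) + m * (c + a \<bullet> y) \<le> c + a \<bullet> (l *\<^sub>R x + m *\<^sub>R y)"
    using \<open>l + m = 1\<close> by simp
qed (rule assms)

lemma concave_on_min: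
  assumes "concave_on S f" "concave_on S g"
  shows "concave_on S (\<lambda>x. min (f x) (g x))"
  unfolding concave_on_iff
proof (intro conjI ballI allI impI)
  show "convex S"
    using assms(1) by (rule concave_on_imp_convex)
  fix x y and l m :: real assume xy: "x \<in> S" "y \<in> S" and lm: "0 \<le> l" "0 \<le> m" "l + m = 1"
  have "l * f x + m * f y \<le> f (l *\<^sub>R x + m *\<^sub>R y)" "l * g x + m * g y \<le> g (l *\<^sub>R x + m *\<^sub>R y)"
    using assms xy lm by (auto simp: concave_on_iff)
  moreover have "l * min (f x) (g x) + m * min (f y) (g y) \<le> l * f x + m * f y"
    "l * min (f x) (g x) + m * min (f y) (g y) \<le> l * g x + m * g y"
    using lm by (intro add_mono mult_left_mono; simp)+
  ultimately show "l * min (f x) (g x) + m * min (f y) (g y)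
      \<le> min (f (l *\<^sub>R x + m *\<^sub>R y)) (g (l *\<^sub>R x + m *\<^sub>R y))"
    by (intro min.boundedI) linarith+
qed

lemma lipschitz_min_norm_sq: "2-lipschitz_on S (\<lambda>w. min ((norm (w - p))\<^sup>2) 1)"
proof (rule lipschitz_onI)
  fix x y
  define m where "m z = min (norm (z - p)) 1" for z
  have sq: "min ((norm (z - p))\<^sup>2) 1 = (m z)\<^sup>2" for z
  proof (cases "norm (z - p) \<le> 1")
    case True
    then show ?thesis
      by (simp add: m_def power_le_one)
  next
    case False
    then have "1 < (norm (z - p))\<^sup>2"
      using one_less_power[of "norm (z - p)" 2] by simp
    then show ?thesis
      using False by (simp add: m_def)
  qed
  have "(m x)\<^sup>2 - (m y)\<^sup>2 = (m x + m y) * (m x - m y)"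
    by (simp add: power2_eq_square algebra_simps)
  moreover have "0 \<le> m x + m y"
    by (simp add: m_def)
  ultimately have "\<bar>(m x)\<^sup>2 - (m y)\<^sup>2\<bar> = (m x + m y) * \<bar>m x - m y\<bar>"
    by (simp add: abs_mult)
  also have "\<dots> \<le> 2 * norm (x - y)"
  proof (rule mult_mono)
    have "\<bar>m x - m y\<bar> \<le> \<bar>norm (x - p) - norm (y - p)\<bar>"
      by (simp add: m_def min_def)
    also have "\<dots> \<le> norm (x - y)"
      using norm_triangle_ineq3[of "x - p" "y - p"] by simp
    finally show "\<bar>m x - m y\<bar> \<le> norm (x - y)" .
  qed (auto simp: m_def)
  finally show "dist (min ((norm (x - p))\<^sup>2) 1) (min ((norm (y - p))\<^sup>2) 1) \<le> 2 * dist x y"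
    by (simp add: sq dist_real_def dist_norm)
qed simp

text \<open>For unit vectors \<open>u, v\<close> with \<open>v \<bullet> u > 0\<close>, the first two terms of the barrier describe the
  hyperplane through \<open>q\<close> orthogonal to \<open>v\<close> as a graph over \<open>u\<^sup>\<bottom>\<close>; the capped quadratic term bends it
  upwards just enough to clear the ball of radius \<open>r\<close> touching \<open>A\<close> at \<open>q\<close>.\<close>

definition upper_barrier :: "'a::euclidean_space \<Rightarrow> real \<Rightarrow> 'a \<Rightarrow> 'a \<Rightarrow> 'a \<Rightarrow> real" where
  "upper_barrier u K q v w = q \<bullet> u - v \<bullet> (w - perp_proj u q) / (v \<bullet> u)
     + K * min ((norm (w - perp_proj u q))\<^sup>2) 1"

lemma lipschitz_upper_barrier:
  assumes v: "norm v = 1" and c: "0 < c" "c \<le> v \<bullet> u" and K: "0 \<le> K"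
  shows "(1 / c + 2 * K)-lipschitz_on S (upper_barrier u K q v)"
proof (rule lipschitz_onI)
  fix x y
  let ?p = "perp_proj u q" and ?\<beta> = "v \<bullet> u" and ?m = "\<lambda>w. min ((norm (w - perp_proj u q))\<^sup>2) 1"
  have "\<bar>v \<bullet> (x - ?p) / ?\<beta> - v \<bullet> (y - ?p) / ?\<beta>\<bar> = \<bar>v \<bullet> (x - y)\<bar> / ?\<beta>"
    using c by (simp add: inner_diff_right diff_divide_distrib[symmetric])
  also have "\<dots> \<le> norm (x - y) / ?\<beta>"
    using Cauchy_Schwarz_ineq2[of v "x - y"] v c by (intro divide_right_mono) auto
  also have "\<dots> \<le> norm (x - y) / c"
    using c by (intro divide_left_mono) auto
  finally have affine: "\<bar>v \<bullet> (x - ?p) / ?\<beta> - v \<bullet> (y - ?p) / ?\<beta>\<bar> \<le> norm (x - y) / c" .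
  have "\<bar>?m x - ?m y\<bar> \<le> 2 * norm (x - y)"
    using lipschitz_onD[OF lipschitz_min_norm_sq, of x UNIV y ?p]
    by (simp add: dist_real_def dist_norm)
  then have "K * \<bar>?m x - ?m y\<bar> \<le> K * (2 * norm (x - y))"
    by (rule mult_left_mono[OF _ K])
  moreover have "\<bar>K * ?m x - K * ?m y\<bar> = K * \<bar>?m x - ?m y\<bar>"
    using K by (simp add: abs_mult flip: right_diff_distrib)
  ultimately have quadratic: "\<bar>K * ?m x - K * ?m y\<bar> \<le> 2 * K * norm (x - y)"
    by simp
  have "upper_barrier u K q v x - upper_barrier u K q v y
      = (K * ?m x - K * ?m y) - (v \<bullet> (x - ?p) / ?\<beta> - v \<bullet> (y - ?p) / ?\<beta>)"
    by (simp add: upper_barrier_def)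
  then show "dist (upper_barrier u K q v x) (upper_barrier u K q v y) \<le> (1 / c + 2 * K) * dist x y"
    using affine quadratic by (auto simp: dist_real_def dist_norm distrib_right abs_le_iff)
qed (use c K in simp)

lemma concave_on_upper_barrier:
  assumes "convex S" "0 \<le> K"
  shows "concave_on S (\<lambda>w. upper_barrier u K q v w - K * (norm w)\<^sup>2)"
proof -
  let ?p = "perp_proj u q" and ?\<beta> = "v \<bullet> u"
  have "upper_barrier u K q v w - K * (norm w)\<^sup>2
      = (q \<bullet> u + v \<bullet> ?p / ?\<beta> + (- (1 / ?\<beta>) *\<^sub>R v) \<bullet> w)
        + K * min ((norm ?p)\<^sup>2 + (- 2 *\<^sub>R ?p) \<bullet> w) (1 - (norm w)\<^sup>2)" for w
  proof -
    have "(norm (w - ?p))\<^sup>2 = (norm w)\<^sup>2 + ((norm ?p)\<^sup>2 + (- 2 *\<^sub>R ?p) \<bullet> w)"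
      using power2_norm_add[of w "- ?p"] by (simp add: inner_commute)
    then have "min ((norm (w - ?p))\<^sup>2) 1
        = (norm w)\<^sup>2 + min ((norm ?p)\<^sup>2 + (- 2 *\<^sub>R ?p) \<bullet> w) (1 - (norm w)\<^sup>2)"
      by (simp add: min_def)
    then show ?thesis
      by (simp add: upper_barrier_def inner_diff_right diff_divide_distrib divide_inverse
          algebra_simps)
  qed
  moreover have "concave_on S (\<lambda>w. (q \<bullet> u + v \<bullet> ?p / ?\<beta> + (- (1 / ?\<beta>) *\<^sub>R v) \<bullet> w)
        + K * min ((norm ?p)\<^sup>2 + (- 2 *\<^sub>R ?p) \<bullet> w) (1 - (norm w)\<^sup>2))"
    using assms
    by (intro concave_on_add concave_on_affine_inner concave_on_cmul concave_on_min
        concave_on_diff convex_on_norm_sq) (simp_all add: concave_on_const)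
  ultimately show ?thesis
    by simp
qed

lemma upper_barrier_lower_bound:
  assumes u: "norm u = 1" and v: "norm v = 1" and c: "0 < c" "c \<le> v \<bullet> u" and K: "0 \<le> K"
  shows "- norm q - (norm w + norm q) / c \<le> upper_barrier u K q v w"
proof -
  let ?p = "perp_proj u q"
  have "v \<bullet> (w - ?p) \<le> norm w + norm q"
    using norm_cauchy_schwarz[of v "w - ?p"] v norm_triangle_ineq4[of w ?p]
      norm_perp_proj_le[OF u, of q]
    by simp
  then have "v \<bullet> (w - ?p) / (v \<bullet> u) \<le> (norm w + norm q) / (v \<bullet> u)"
    using c by (intro divide_right_mono) auto
  also have "\<dots> \<le> (norm w + norm q) / c"
    using c by (intro divide_left_mono) auto
  finally have "v \<bullet> (w - ?p) / (v \<bullet> u) \<le> (norm w + norm q) / c" .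
  moreover have "- norm q \<le> q \<bullet> u"
    using abs_inner_unit_le[OF u, of q] by simp
  moreover have "0 \<le> K * min ((norm (w - ?p))\<^sup>2) 1"
    using K by simp
  ultimately show ?thesis
    by (simp add: upper_barrier_def)
qed

text \<open>The free-ball inequality in coordinates: height \<open>s\<close> along \<open>u\<close>, horizontal offset of size \<open>Z\<close>,
  \<open>a = v \<bullet> z\<close> and \<open>\<beta> = v \<bullet> u\<close>.\<close>

lemma height_bound_of_ball_inequality:
  fixes s a Z \<beta> c r :: real
  assumes c: "0 < c" "c \<le> \<beta>" "\<beta> \<le> 1" and r: "0 < r" and s: "\<bar>s\<bar> \<le> r * c"
    and Z: "0 \<le> Z" "Z \<le> r" "\<bar>a\<bar> \<le> Z"
    and ineq: "2 * r * (a + s * \<beta>) \<le> Z\<^sup>2 + s\<^sup>2"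
  shows "s \<le> - a / \<beta> + (1 + 9 / c\<^sup>2) / (2 * r * c) * Z\<^sup>2"
proof (cases "s \<le> - a / \<beta>")
  case True
  moreover have "0 \<le> (1 + 9 / c\<^sup>2) / (2 * r * c) * Z\<^sup>2"
    using c r by simp
  ultimately show ?thesis
    by linarith
next
  case False
  have \<beta>: "0 < \<beta>"
    using c by simp
  then have sb: "- a < s * \<beta>"
    using False by (simp add: field_simps)
  have "\<bar>s\<bar> * c \<le> 3 * Z"
  proof (cases "0 \<le> s")
    case True
    have "r * c \<le> r * \<beta>"
      using c r by (intro mult_left_mono) auto
    then have "s \<le> r * \<beta>"
      using s True by simp
    then have "s * s \<le> s * (r * \<beta>)"
      using True by (intro mult_left_mono) auto
    moreover have "Z * Z \<le> r * Z"
      using Z by (intro mult_right_mono) auto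
    moreover have "r * (- a) \<le> r * Z"
      using Z r by (intro mult_left_mono) auto
    ultimately have "r * (\<beta> * s) \<le> r * (3 * Z)"
      using ineq by (simp add: power2_eq_square algebra_simps)
    then have "\<beta> * s \<le> 3 * Z"
      using r by simp
    moreover have "c * s \<le> \<beta> * s"
      using c True by (intro mult_right_mono) auto
    ultimately show ?thesis
      using True by (simp add: mult.commute)
  next
    case False
    have "s * \<beta> \<le> s * c"
      using c False by (intro mult_left_mono_neg) auto
    moreover have "\<bar>s\<bar> * c = - (s * c)"
      using False by simp
    ultimately show ?thesis
      using sb Z abs_ge_self[of a] by linarith
  qed
  then have "(\<bar>s\<bar> * c)\<^sup>2 \<le> (3 * Z)\<^sup>2"
    using c by (intro power_mono) auto
  then have "s\<^sup>2 \<le> 9 / c\<^sup>2 * Z\<^sup>2"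
    using c by (simp add: power_mult_distrib field_simps)
  then have "s * (2 * r * \<beta>) \<le> Z\<^sup>2 * (1 + 9 / c\<^sup>2) - 2 * r * a"
    using ineq by (simp add: algebra_simps)
  then have "s \<le> (Z\<^sup>2 * (1 + 9 / c\<^sup>2) - 2 * r * a) / (2 * r * \<beta>)"
    using r \<beta> by (simp add: pos_le_divide_eq)
  also have "\<dots> = Z\<^sup>2 * (1 + 9 / c\<^sup>2) / (2 * r * \<beta>) - a / \<beta>"
    using r \<beta> by (simp add: field_simps)
  also have "Z\<^sup>2 * (1 + 9 / c\<^sup>2) / (2 * r * \<beta>) \<le> Z\<^sup>2 * (1 + 9 / c\<^sup>2) / (2 * r * c)"
    using r c by (intro divide_left_mono) auto
  finally show ?thesis
    by (simp add: mult.commute)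
qed

lemma upper_barrier_above_free_ball:
  assumes u: "norm u = 1" and v: "norm v = 1" and c: "0 < c" "c \<le> v \<bullet> u" and r: "0 < r"
    and K: "(1 + 9 / c\<^sup>2) / (2 * r * c) \<le> K" and free: "free_ball A q v r"
    and y: "y \<in> A" and near: "norm (y - q) \<le> min (r * c) 1"
  shows "y \<bullet> u \<le> upper_barrier u K q v (perp_proj u y)"
proof -
  define d s z \<beta> where "d = y - q" and "s = d \<bullet> u" and "z = perp_proj u d" and "\<beta> = v \<bullet> u"
  have "\<beta> \<le> 1"
    using norm_cauchy_schwarz[of v u] u v by (simp add: \<beta>_def)
  have "2 * r * (v \<bullet> d) \<le> (norm d)\<^sup>2"
    using free y free_ball_iff_inner[OF v] r by (auto simp: d_def)
  moreover have "v \<bullet> d = v \<bullet> z + s * \<beta>" "(norm d)\<^sup>2 = (norm z)\<^sup>2 + s\<^sup>2"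
    using inner_perp_proj[of v u d] norm_sq_perp_proj[OF u, of d]
    by (simp_all add: z_def s_def \<beta>_def)
  ultimately have ineq: "2 * r * (v \<bullet> z + s * \<beta>) \<le> (norm z)\<^sup>2 + s\<^sup>2"
    by simp
  have "\<bar>s\<bar> \<le> norm d" "norm z \<le> norm d"
    using abs_inner_unit_le[OF u] norm_perp_proj_le[OF u] by (simp_all add: s_def z_def)
  moreover have "r * c \<le> r"
    using r c \<open>\<beta> \<le> 1\<close> by (simp add: \<beta>_def)
  ultimately have bounds: "\<bar>s\<bar> \<le> r * c" "norm z \<le> r" "norm z \<le> 1"
    using near by (auto simp: d_def)
  have "\<bar>v \<bullet> z\<bar> \<le> norm z"
    using Cauchy_Schwarz_ineq2[of v z] v by simp
  then have "s \<le> - (v \<bullet> z) / \<beta> + (1 + 9 / c\<^sup>2) / (2 * r * c) * (norm z)\<^sup>2"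
    using c \<open>\<beta> \<le> 1\<close> r bounds ineq by (intro height_bound_of_ball_inequality) (auto simp: \<beta>_def)
  also have "\<dots> \<le> - (v \<bullet> z) / \<beta> + K * (norm z)\<^sup>2"
    using K by (intro add_left_mono mult_right_mono) auto
  finally have "s \<le> - (v \<bullet> z) / \<beta> + K * (norm z)\<^sup>2" .
  moreover have "perp_proj u y - perp_proj u q = z"
    by (simp add: z_def d_def perp_proj_diff)
  moreover have "min ((norm z)\<^sup>2) 1 = (norm z)\<^sup>2"
    using bounds by (simp add: power_le_one)
  moreover have "y \<bullet> u = q \<bullet> u + s"
    by (simp add: s_def d_def inner_diff_left)
  ultimately show ?thesis
    by (simp add: upper_barrier_def \<beta>_def)
qed

lemma upper_barrier_below_normal_point:
  assumes u: "norm u = 1" and v: "norm v = 1" and \<beta>: "0 < v \<bullet> u" and \<delta>: "0 < \<delta>"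
    and K: "0 \<le> K" "K * \<delta> < 1"
  shows "upper_barrier u K q v (perp_proj u (q + \<delta> *\<^sub>R v)) < (q + \<delta> *\<^sub>R v) \<bullet> u"
proof -
  define \<beta> where "\<beta> = v \<bullet> u"
  have "\<beta> \<le> 1"
    using norm_cauchy_schwarz[of v u] u v by (simp add: \<beta>_def)
  have z: "perp_proj u (q + \<delta> *\<^sub>R v) - perp_proj u q = \<delta> *\<^sub>R perp_proj u v"
    by (simp add: perp_proj_add perp_proj_scaleR)
  have "(norm (perp_proj u v))\<^sup>2 = 1 - \<beta>\<^sup>2"
    using norm_sq_perp_proj[OF u, of v] v by (simp add: \<beta>_def)
  then have n: "(norm (perp_proj u (q + \<delta> *\<^sub>R v) - perp_proj u q))\<^sup>2 = \<delta>\<^sup>2 * (1 - \<beta>\<^sup>2)"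
    using \<delta> by (simp add: z power_mult_distrib)
  have i: "v \<bullet> (perp_proj u (q + \<delta> *\<^sub>R v) - perp_proj u q) = \<delta> * (1 - \<beta>\<^sup>2)"
    using v by (simp add: z inner_perp_proj norm_eq_1 \<beta>_def power2_eq_square)
  define E where "E = \<delta> * (1 - \<beta>\<^sup>2)"
  have "E * \<beta> \<le> E"
    using \<beta> \<delta> \<open>\<beta> \<le> 1\<close> by (simp add: E_def \<beta>_def power_le_one mult_left_le)
  then have "E \<le> E / \<beta>"
    using \<beta> by (simp add: \<beta>_def le_divide_eq)
  moreover have "K * min (\<delta>\<^sup>2 * (1 - \<beta>\<^sup>2)) 1 \<le> K * \<delta>\<^sup>2"
    using K \<beta> by (intro mult_left_mono) (auto simp: \<beta>_def min_le_iff_disj mult_left_le)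
  moreover have "K * \<delta>\<^sup>2 < \<delta>"
    using K \<delta> by (simp add: power2_eq_square)
  moreover have "\<delta> * \<beta>\<^sup>2 \<le> \<delta> * \<beta>"
    using \<beta> \<delta> \<open>\<beta> \<le> 1\<close> by (simp add: \<beta>_def power2_eq_square mult_left_le)
  moreover have "E = \<delta> - \<delta> * \<beta>\<^sup>2"
    by (simp add: E_def algebra_simps)
  ultimately have "- (E / \<beta>) + K * min (\<delta>\<^sup>2 * (1 - \<beta>\<^sup>2)) 1 < \<delta> * \<beta>"
    by linarith
  then show ?thesis
    using n i by (simp add: upper_barrier_def \<beta>_def E_def inner_add_left)
qed

lemma lipschitz_on_INF:
  fixes \<F> :: "('a::metric_space \<Rightarrow> real) set"
  assumes "\<F> \<noteq> {}" and lip: "\<And>g. g \<in> \<F> \<Longrightarrow> L-lipschitz_on S g"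
    and bdd: "\<And>x. x \<in> S \<Longrightarrow> bdd_below ((\<lambda>g. g x) ` \<F>)"
  shows "L-lipschitz_on S (\<lambda>x. INF g\<in>\<F>. g x)"
proof (rule lipschitz_onI)
  have le: "(INF g\<in>\<F>. g x) \<le> (INF g\<in>\<F>. g y) + L * dist x y" if "x \<in> S" "y \<in> S" for x y
  proof -
    have "(INF g\<in>\<F>. g x) - L * dist x y \<le> g y" if "g \<in> \<F>" for g
      using cINF_lower[OF bdd[OF \<open>x \<in> S\<close>] that] lipschitz_onD[OF lip[OF that] \<open>x \<in> S\<close> \<open>y \<in> S\<close>]
      by (simp add: dist_real_def abs_le_iff)
    then have "(INF g\<in>\<F>. g x) - L * dist x y \<le> (INF g\<in>\<F>. g y)"
      by (rule cINF_greatest[OF \<open>\<F> \<noteq> {}\<close>])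
    then show ?thesis
      by simp
  qed
  fix x y assume "x \<in> S" "y \<in> S"
  then show "dist (INF g\<in>\<F>. g x) (INF g\<in>\<F>. g y) \<le> L * dist x y"
    using le[of x y] le[of y x] by (simp add: dist_real_def dist_commute abs_le_iff)
next
  show "0 \<le> L"
    using lip \<open>\<F> \<noteq> {}\<close> lipschitz_on_nonneg by blast
qed

lemma concave_on_INF_diff:
  fixes \<F> :: "('a::real_vector \<Rightarrow> real) set"
  assumes "\<F> \<noteq> {}" and conc: "\<And>g. g \<in> \<F> \<Longrightarrow> concave_on S (\<lambda>x. g x - h x)"
    and bdd: "\<And>x. x \<in> S \<Longrightarrow> bdd_below ((\<lambda>g. g x) ` \<F>)"
  shows "concave_on S (\<lambda>x. (INF g\<in>\<F>. g x) - h x)"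
  unfolding concave_on_iff
proof (intro conjI ballI allI impI)
  show "convex S"
    using conc \<open>\<F> \<noteq> {}\<close> concave_on_imp_convex by blast
  fix x y and l m :: real assume xy: "x \<in> S" "y \<in> S" and lm: "0 \<le> l" "0 \<le> m" "l + m = 1"
  let ?z = "l *\<^sub>R x + m *\<^sub>R y"
  have "l * ((INF g\<in>\<F>. g x) - h x) + m * ((INF g\<in>\<F>. g y) - h y) + h ?z \<le> g ?z" if "g \<in> \<F>" for g
  proof -
    have "l * ((INF g\<in>\<F>. g x) - h x) + m * ((INF g\<in>\<F>. g y) - h y)
        \<le> l * (g x - h x) + m * (g y - h y)"
      using lm cINF_lower[OF bdd[OF xy(1)] that] cINF_lower[OF bdd[OF xy(2)] that]
      by (intro add_mono mult_left_mono) auto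
    also have "\<dots> \<le> g ?z - h ?z"
      using conc[OF that] xy lm by (simp add: concave_on_iff)
    finally show ?thesis
      by simp
  qed
  then have "l * ((INF g\<in>\<F>. g x) - h x) + m * ((INF g\<in>\<F>. g y) - h y) + h ?z \<le> (INF g\<in>\<F>. g ?z)"
    by (rule cINF_greatest[OF \<open>\<F> \<noteq> {}\<close>])
  then show "l * ((INF g\<in>\<F>. g x) - h x) + m * ((INF g\<in>\<F>. g y) - h y) \<le> (INF g\<in>\<F>. g ?z) - h ?z"
    by simp
qed

text \<open>The constant \<open>M\<close> keeps the family nonempty, so that its infimum is never the junk value
  \<open>Inf {}\<close>.\<close>

lemma barrier_envelope:
  fixes u :: "'a::euclidean_space" and M :: real
  assumes u: "norm u = 1" and c: "0 < c" and K: "0 \<le> K"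
    and P: "\<And>q v. (q, v) \<in> P \<Longrightarrow> norm v = 1 \<and> c \<le> v \<bullet> u \<and> norm q \<le> B"
    and f_INF: "\<And>w. f w = (INF g\<in>insert (\<lambda>_. M) ((\<lambda>(q, v). upper_barrier u K q v) ` P). g w)"
  shows "(1 / c + 2 * K)-lipschitz_on (perp u) f"
    and "semiconcave u f"
    and "\<And>q v w. (q, v) \<in> P \<Longrightarrow> f w \<le> upper_barrier u K q v w"
    and "\<And>t w. t \<le> M \<Longrightarrow> (\<And>q v. (q, v) \<in> P \<Longrightarrow> t \<le> upper_barrier u K q v w) \<Longrightarrow> t \<le> f w"
proof -
  define \<F> where "\<F> = insert (\<lambda>_. M) ((\<lambda>(q, v). upper_barrier u K q v) ` P)"
  have f: "f w = (INF g\<in>\<F>. g w)" for w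
    by (simp add: f_INF \<F>_def)
  have cases_\<F>: thesis if "g \<in> \<F>" "g = (\<lambda>_. M) \<Longrightarrow> thesis"
    "\<And>q v. norm v = 1 \<Longrightarrow> c \<le> v \<bullet> u \<Longrightarrow> norm q \<le> B \<Longrightarrow> g = upper_barrier u K q v \<Longrightarrow> thesis"
    for g thesis
    using that P by (auto simp: \<F>_def)
  have "min M (- B - (norm w + B) / c) \<le> g w" if "g \<in> \<F>" for g w
  proof (rule cases_\<F>[OF that])
    fix q v assume v: "norm v = 1" "c \<le> v \<bullet> u" and q: "norm q \<le> B"
      and g: "g = upper_barrier u K q v"
    have "(norm w + norm q) / c \<le> (norm w + B) / c"
      using q c by (intro divide_right_mono) auto
    then have "- B - (norm w + B) / c \<le> - norm q - (norm w + norm q) / c"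
      using q by linarith
    also have "\<dots> \<le> g w"
      using upper_barrier_lower_bound[OF u v(1) c v(2) K] g by simp
    finally show ?thesis
      by simp
  qed simp
  then have bdd: "bdd_below ((\<lambda>g. g w) ` \<F>)" for w
    by (rule bdd_belowI2)
  show "(1 / c + 2 * K)-lipschitz_on (perp u) f"
    unfolding f[abs_def]
  proof (rule lipschitz_on_INF)
    fix g assume "g \<in> \<F>"
    then show "(1 / c + 2 * K)-lipschitz_on (perp u) g"
    proof (rule cases_\<F>)
      show "(1 / c + 2 * K)-lipschitz_on (perp u) g" if "g = (\<lambda>_. M)"
        unfolding that by (rule lipschitz_on_mono[OF lipschitz_on_constant]) (use c K in auto)
    qed (use lipschitz_upper_barrier c K in auto)
  qed (use bdd in \<open>auto simp: \<F>_def\<close>)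
  have "concave_on (perp u) (\<lambda>w. f w - K * (norm w)\<^sup>2)"
    unfolding f[abs_def]
  proof (rule concave_on_INF_diff)
    fix g assume "g \<in> \<F>"
    then show "concave_on (perp u) (\<lambda>w. g w - K * (norm w)\<^sup>2)"
    proof (rule cases_\<F>)
      show "concave_on (perp u) (\<lambda>w. g w - K * (norm w)\<^sup>2)" if "g = (\<lambda>_. M)"
        unfolding that using K convex_perp
        by (intro concave_on_diff convex_on_cmul convex_on_norm_sq) (auto simp: concave_on_const)
    qed (use concave_on_upper_barrier[OF convex_perp K] in auto)
  qed (use bdd in \<open>auto simp: \<F>_def\<close>)
  then show "semiconcave u f"
    unfolding semiconcave_def using K by (intro exI[of _ "2 * K"]) auto
  show "\<And>q v w. (q, v) \<in> P \<Longrightarrow> f w \<le> upper_barrier u K q v w"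
    unfolding f using bdd by (intro cINF_lower) (auto simp: \<F>_def)
  show "\<And>t w. t \<le> M \<Longrightarrow> (\<And>q v. (q, v) \<in> P \<Longrightarrow> t \<le> upper_barrier u K q v w) \<Longrightarrow> t \<le> f w"
    unfolding f by (intro cINF_greatest) (auto simp: \<F>_def)
qed

context reach_ge
begin

lemma barrier_envelope_hypograph:
  assumes a: "a \<in> A" and u: "norm u = 1" and r: "0 < r" "r < eps" and c: "0 < c" "c \<le> 1"
    and K: "(1 + 9 / c\<^sup>2) / (2 * r * c) \<le> K" and \<rho>: "\<rho> \<le> r * c / 2" "\<rho> \<le> 1 / 2"
    and e: "0 < e" "e \<le> \<rho> / 2" "K * e < 1"
    and P: "P = {(q, v). q \<in> A \<and> norm (q - a) \<le> \<rho> \<and> norm v = 1 \<and> free_ball A q v r}"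
    and normal: "\<And>q v. (q, v) \<in> P \<Longrightarrow> c \<le> v \<bullet> u"
    and f_le: "\<And>q v w. (q, v) \<in> P \<Longrightarrow> f w \<le> upper_barrier u K q v w"
    and f_ge: "\<And>t w. t \<le> a \<bullet> u + 1 \<Longrightarrow> (\<And>q v. (q, v) \<in> P \<Longrightarrow> t \<le> upper_barrier u K q v w)
      \<Longrightarrow> t \<le> f w"
  shows "A \<inter> ball a e = hyp u f \<inter> ball a e"
proof -
  have "0 < (1 + 9 / c\<^sup>2) / (2 * r * c)"
    using r c by (intro divide_pos_pos add_pos_nonneg) auto
  then have "0 \<le> K"
    using K by linarith
  have "r * c \<le> r"
    using r c by simp
  have below: "y \<bullet> u \<le> f (perp_proj u y)" if y: "y \<in> A" "dist a y < e" for y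
  proof (rule f_ge)
    show "y \<bullet> u \<le> a \<bullet> u + 1"
      using abs_inner_unit_le[OF u, of "y - a"] y e \<rho>
      by (simp add: dist_norm norm_minus_commute inner_diff_left)
    fix q v assume "(q, v) \<in> P"
    then have q: "norm (q - a) \<le> \<rho>" and v: "norm v = 1" "free_ball A q v r"
      by (auto simp: P)
    have "norm (y - q) \<le> min (r * c) 1"
      using norm_triangle_ineq[of "y - a" "a - q"] y(2) q e \<rho>
      by (simp add: dist_norm norm_minus_commute)
    then show "y \<bullet> u \<le> upper_barrier u K q v (perp_proj u y)"
      using upper_barrier_above_free_ball[OF u v(1) c(1) normal[OF \<open>(q, v) \<in> P\<close>] r(1) K v(2) y(1)]
      by simp
  qed
  have above: "f (perp_proj u y) < y \<bullet> u" if y: "y \<notin> A" "dist a y < e" for y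
  proof -
    define \<delta> q v where "\<delta> = infdist y A" and "q = closest_point A y" and "v = outer_normal y"
    have \<delta>: "0 < \<delta>" "\<delta> \<le> dist a y"
      using infdist_pos_not_in_closed[OF closed nonempty y(1)] infdist_le[OF a, of y]
      by (auto simp: \<delta>_def dist_commute)
    then have "\<delta> < eps"
      using y(2) e \<rho> r c \<open>r * c \<le> r\<close> by linarith
    have y_eq: "y = q + \<delta> *\<^sub>R v" and v: "norm v = 1"
      using outer_normal[OF y(1)] by (simp_all add: \<delta>_def q_def v_def)
    have "norm (q - a) \<le> \<rho>"
      using norm_triangle_ineq[of "q - y" "y - a"] y_eq v \<delta> y(2) e
      by (simp add: dist_norm norm_minus_commute)
    moreover have "free_ball A q v r"
      using free_ball_outer_normal[OF y(1)] \<open>\<delta> < eps\<close> r by (simp add: \<delta>_def q_def v_def)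
    ultimately have "(q, v) \<in> P"
      using closest_point_in v by (simp add: P q_def)
    then have "f (perp_proj u y) \<le> upper_barrier u K q v (perp_proj u (q + \<delta> *\<^sub>R v))"
      using f_le y_eq by simp
    also have "\<dots> < y \<bullet> u"
    proof -
      have "K * \<delta> \<le> K * e"
        using \<delta> y(2) \<open>0 \<le> K\<close> by (intro mult_left_mono) auto
      then show ?thesis
        using upper_barrier_below_normal_point[OF u v _ \<delta>(1) \<open>0 \<le> K\<close>] normal[OF \<open>(q, v) \<in> P\<close>]
          c(1) e y_eq by simp
    qed
    finally show ?thesis .
  qed
  show ?thesis
    using below above by (auto simp: mem_hyp_iff[OF u]) (meson not_le)
qed

lemma locally_semiconcave_hypograph:
  assumes a: "a \<in> A" and span: "span (Tan A a) = UNIV"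
  obtains e u f where "0 < e" "norm u = 1" "\<exists>L. L-lipschitz_on (perp u) f" "semiconcave u f"
    "A \<inter> ball a e = hyp u f \<inter> ball a e"
proof -
  define r where "r = eps / 2"
  have r: "0 < r" "r < eps"
    using eps_pos by (auto simp: r_def)
  obtain u \<rho> c where u: "norm u = 1" and "0 < \<rho>" and c: "0 < c" "c \<le> 1"
    and normal: "\<And>q v. norm (q - a) \<le> \<rho> \<Longrightarrow> norm v = 1 \<Longrightarrow> free_ball A q v r \<Longrightarrow> c \<le> v \<bullet> u"
    using exists_uniform_direction[OF span r(1)] by blast
  define \<rho>' where "\<rho>' = min \<rho> (min (r * c / 2) (1 / 2))"
  define K where "K = (1 + 9 / c\<^sup>2) / (2 * r * c)"
  define e where "e = min (\<rho>' / 2) (1 / (2 * K))"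
  have \<rho>': "0 < \<rho>'" "\<rho>' \<le> \<rho>" "\<rho>' \<le> r * c / 2" "\<rho>' \<le> 1 / 2"
    using \<open>0 < \<rho>\<close> r c by (auto simp: \<rho>'_def)
  have K: "0 < K"
    unfolding K_def using r c by (intro divide_pos_pos add_pos_nonneg) auto
  have e: "0 < e" "e \<le> \<rho>' / 2" "K * e < 1"
    using \<rho>' K by (auto simp: e_def min_def field_simps)
  define P where "P = {(q, v). q \<in> A \<and> norm (q - a) \<le> \<rho>' \<and> norm v = 1 \<and> free_ball A q v r}"
  define f where "f w = (INF g\<in>insert (\<lambda>_. a \<bullet> u + 1) ((\<lambda>(q, v). upper_barrier u K q v) ` P). g w)"
    for w
  have P_normal: "norm v = 1 \<and> c \<le> v \<bullet> u \<and> norm q \<le> norm a + 1" if "(q, v) \<in> P" for q v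
  proof -
    have "norm (q - a) \<le> \<rho>'" "norm v = 1" "free_ball A q v r"
      using that by (auto simp: P_def)
    then show ?thesis
      using normal[of q v] \<rho>' norm_triangle_ineq2[of q a] by auto
  qed
  note envelope = barrier_envelope[OF u c(1) less_imp_le[OF K] P_normal f_def]
  have "A \<inter> ball a e = hyp u f \<inter> ball a e"
    using P_normal
    by (intro barrier_envelope_hypograph[OF a u r c _ \<rho>'(3,4) e P_def _ envelope(3) envelope(4)])
      (simp_all add: K_def)
  then show thesis
    using that e(1) u envelope(1,2) by blast
qed

end

section \<open>Shears and convex bodies\<close>

definition shear :: "'a::euclidean_space \<Rightarrow> real \<Rightarrow> 'a \<Rightarrow> 'a" where
  "shear u k x = x + (k * (norm (perp_proj u x))\<^sup>2) *\<^sub>R u"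

context
  fixes u :: "'a::euclidean_space"
  assumes unit: "norm u = 1"
begin

lemma perp_proj_shear: "perp_proj u (shear u k x) = perp_proj u x"
  by (simp add: shear_def perp_proj_add_scaleR_unit[OF unit])

lemma inner_shear: "shear u k x \<bullet> u = x \<bullet> u + k * (norm (perp_proj u x))\<^sup>2"
  by (simp add: shear_def inner_add_left inner_unit_self[OF unit])

lemma shear_mem_hyp_iff: "shear u k x \<in> hyp u f \<longleftrightarrow> x \<in> hyp u (\<lambda>w. f w - k * (norm w)\<^sup>2)"
  by (simp add: mem_hyp_iff[OF unit] inner_shear perp_proj_shear le_diff_eq)

lemma shear_neg_shear: "shear u (- k) (shear u k x) = x"
proof -
  have "shear u (- k) (shear u k x) = shear u k x - (k * (norm (perp_proj u x))\<^sup>2) *\<^sub>R u"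
    by (simp add: shear_def[of u "- k"] perp_proj_shear)
  then show ?thesis
    by (simp add: shear_def)
qed

lemma shear_shear_neg: "shear u k (shear u (- k) x) = x"
  using shear_neg_shear[of "- k"] by simp

lemma has_derivative_shear:
  "(shear u k has_derivative (\<lambda>h. h + (2 * k * (perp_proj u x \<bullet> perp_proj u h)) *\<^sub>R u)) (at x)"
proof -
  have P: "(perp_proj u has_derivative perp_proj u) (at x)"
    by (rule bounded_linear.has_derivative[OF bounded_linear_perp_proj has_derivative_ident])
  have "((\<lambda>x. x + (k * (perp_proj u x \<bullet> perp_proj u x)) *\<^sub>R u) has_derivative
      (\<lambda>h. h + (k * (perp_proj u x \<bullet> perp_proj u h + perp_proj u h \<bullet> perp_proj u x)) *\<^sub>R u)) (at x)"
    by (intro has_derivative_add has_derivative_ident has_derivative_scaleR_left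
        has_derivative_mult_right has_derivative_inner P)
  then show ?thesis
    unfolding shear_def[abs_def] power2_norm_eq_inner
    by (rule has_derivative_eq_rhs) (simp add: fun_eq_iff inner_commute algebra_simps)
qed

lemma shear_derivative_lipschitz:
  obtains D where "\<And>x. (shear u k has_derivative blinfun_apply (D x)) (at x)"
    "(2 * \<bar>k\<bar>)-lipschitz_on UNIV D"
proof
  define D where "D x = Blinfun (\<lambda>h. h + (2 * k * (perp_proj u x \<bullet> perp_proj u h)) *\<^sub>R u)" for x
  have D: "blinfun_apply (D x) = (\<lambda>h. h + (2 * k * (perp_proj u x \<bullet> perp_proj u h)) *\<^sub>R u)" for x
    unfolding D_def using has_derivative_bounded_linear[OF has_derivative_shear]
    by (rule bounded_linear_Blinfun_apply)
  show "(shear u k has_derivative blinfun_apply (D x)) (at x)" for x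
    unfolding D by (rule has_derivative_shear)
  show "(2 * \<bar>k\<bar>)-lipschitz_on UNIV D"
  proof (rule lipschitz_onI)
    fix x y :: 'a
    have "norm (D x - D y) \<le> 2 * \<bar>k\<bar> * norm (x - y)"
    proof (rule norm_blinfun_bound)
      fix h
      have "norm (blinfun_apply (D x - D y) h) = 2 * \<bar>k\<bar> * \<bar>perp_proj u (x - y) \<bullet> perp_proj u h\<bar>"
        using unit by (simp add: blinfun.diff_left D perp_proj_diff inner_diff_left abs_mult
            flip: scaleR_diff_left right_diff_distrib)
      also have "\<dots> \<le> 2 * \<bar>k\<bar> * (norm (x - y) * norm h)"
      proof (rule mult_left_mono)
        have "norm (perp_proj u (x - y)) * norm (perp_proj u h) \<le> norm (x - y) * norm h"
          using norm_perp_proj_le[OF unit] by (intro mult_mono) auto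
        then show "\<bar>perp_proj u (x - y) \<bullet> perp_proj u h\<bar> \<le> norm (x - y) * norm h"
          using Cauchy_Schwarz_ineq2[of "perp_proj u (x - y)" "perp_proj u h"] by linarith
      qed simp
      finally show "norm (blinfun_apply (D x - D y) h) \<le> 2 * \<bar>k\<bar> * norm (x - y) * norm h"
        by (simp add: mult.assoc)
    qed simp
    then show "dist (D x) (D y) \<le> 2 * \<bar>k\<bar> * dist x y"
      by (simp add: dist_norm)
  qed simp
qed

lemma C11_diffeo_shear: "C11_diffeo (shear u k) UNIV UNIV"
proof -
  have "inj (shear u k)"
    by (rule inj_on_inverseI[of _ "shear u (- k)"]) (rule shear_neg_shear)
  then have inv: "inv_into UNIV (shear u k) = shear u (- k)"
    by (intro ext inv_into_f_eq) (simp_all add: shear_shear_neg)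
  have "bij_betw (shear u k) UNIV UNIV"
    by (rule bij_betw_byWitness[of _ "shear u (- k)"])
      (simp_all add: shear_neg_shear shear_shear_neg)
  moreover obtain D where "\<And>x. (shear u k has_derivative blinfun_apply (D x)) (at x)"
    "(2 * \<bar>k\<bar>)-lipschitz_on UNIV D"
    using shear_derivative_lipschitz[of k] by blast
  moreover obtain E where "\<And>x. (shear u (- k) has_derivative blinfun_apply (E x)) (at x)"
    "(2 * \<bar>- k\<bar>)-lipschitz_on UNIV E"
    using shear_derivative_lipschitz[of "- k"] by blast
  ultimately show ?thesis
    unfolding C11_diffeo_def inv by (intro conjI open_UNIV exI[of _ D] exI[of _ E]) auto
qed

lemma isCont_shear: "isCont (shear u k) x"
  by (rule has_derivative_continuous[OF has_derivative_shear])

end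

lemma convex_hyp:
  fixes u :: "'a::euclidean_space"
  assumes u: "norm u = 1" and conc: "concave_on (perp u) g"
  shows "convex (hyp u g)"
proof (rule convexI)
  fix x y and l m :: real
  assume "x \<in> hyp u g" "y \<in> hyp u g" and lm: "0 \<le> l" "0 \<le> m" "l + m = 1"
  then have "(l *\<^sub>R x + m *\<^sub>R y) \<bullet> u \<le> l * g (perp_proj u x) + m * g (perp_proj u y)"
    by (auto simp: mem_hyp_iff[OF u] inner_add_left intro!: add_mono mult_left_mono)
  also have "\<dots> \<le> g (l *\<^sub>R perp_proj u x + m *\<^sub>R perp_proj u y)"
    using conc perp_proj_in_perp[OF u] lm by (simp add: concave_on_iff)
  finally show "l *\<^sub>R x + m *\<^sub>R y \<in> hyp u g"
    by (simp add: mem_hyp_iff[OF u] perp_proj_add perp_proj_scaleR)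
qed

lemma convex_body_box_Int_hyp:
  fixes u :: "'a::euclidean_space"
  assumes u: "norm u = 1" and cont: "continuous_on (perp u) g" and conc: "concave_on (perp u) g"
    and x0: "x0 \<in> hyp u g" and s: "0 < s"
  shows "convex_body ({x. norm (perp_proj u (x - x0)) \<le> s \<and> \<bar>(x - x0) \<bullet> u\<bar> \<le> s} \<inter> hyp u g)"
    (is "convex_body (?B \<inter> _)")
proof -
  have hyp: "hyp u g = {x. x \<bullet> u \<le> g (perp_proj u x)}"
    by (auto simp: mem_hyp_iff[OF u])
  have cont_P: "continuous_on UNIV (perp_proj u)"
    by (rule linear_continuous_on[OF bounded_linear_perp_proj])
  have cont_gP: "continuous_on UNIV (\<lambda>x. g (perp_proj u x))"
    using perp_proj_in_perp[OF u] by (intro continuous_on_compose2[OF cont cont_P]) auto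
  have "closed (?B \<inter> hyp u g)"
    unfolding hyp perp_proj_diff
    by (intro closed_Int closed_Collect_conj closed_Collect_le continuous_intros cont_P cont_gP)
  moreover have "bounded ?B"
    unfolding bounded_iff
  proof (intro exI ballI)
    fix x assume "x \<in> ?B"
    then show "norm x \<le> norm x0 + 2 * s"
      using norm_le_perp_proj_add[OF u, of "x - x0"] norm_triangle_ineq2[of x x0] by auto
  qed
  moreover have "convex ?B"
  proof -
    have B: "?B = perp_proj u -` cball (perp_proj u x0) s \<inter> {x. x0 \<bullet> u - s \<le> x \<bullet> u}
        \<inter> {x. x \<bullet> u \<le> x0 \<bullet> u + s}"
      by (auto simp: abs_le_iff inner_diff_left perp_proj_diff dist_norm norm_minus_commute)
    have "convex (perp_proj u -` cball (perp_proj u x0) s)"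
      by (intro convex_linear_vimage bounded_linear.linear[OF bounded_linear_perp_proj]
          convex_cball)
    moreover have "convex {x. x0 \<bullet> u - s \<le> x \<bullet> u}" "convex {x. x \<bullet> u \<le> x0 \<bullet> u + s}"
      using convex_halfspace_ge[of "x0 \<bullet> u - s" u] convex_halfspace_le[of u "x0 \<bullet> u + s"]
      by (simp_all add: inner_commute)
    ultimately show ?thesis
      unfolding B by (intro convex_Int)
  qed
  moreover have "interior (?B \<inter> hyp u g) \<noteq> {}"
  proof -
    let ?U = "{x. norm (perp_proj u (x - x0)) < s \<and> \<bar>(x - x0) \<bullet> u\<bar> < s \<and> x \<bullet> u < g (perp_proj u x)}"
    let ?x1 = "x0 - (s / 2) *\<^sub>R u"
    have "open ?U"
      unfolding perp_proj_diff
      by (intro open_Collect_conj open_Collect_less continuous_intros cont_P cont_gP)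
    moreover have "perp_proj u (- ((s / 2) *\<^sub>R u)) = 0"
      by (simp add: perp_proj_def inner_unit_self[OF u])
    then have "?x1 \<in> ?U"
      using x0 s perp_proj_add_scaleR_unit[OF u, of x0 "- s / 2"]
      by (simp add: mem_hyp_iff[OF u] inner_diff_left inner_unit_self[OF u])
    moreover have "?U \<subseteq> ?B \<inter> hyp u g"
      by (auto simp: hyp)
    ultimately show ?thesis
      using interiorI by blast
  qed
  ultimately show ?thesis
    by (simp add: convex_body_def compact_eq_bounded_closed bounded_Int convex_Int
        convex_hyp[OF u conc])
qed

lemma semiconcave_hypograph_shear_nbhd:
  fixes u :: "'a::euclidean_space"
  assumes u: "norm u = 1" and cont: "continuous_on (perp u) f"
    and conc: "concave_on (perp u) (\<lambda>w. f w - K * (norm w)\<^sup>2)"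
    and e: "0 < e" and a: "a \<in> A" and hyp_eq: "A \<inter> ball a e = hyp u f \<inter> ball a e"
  obtains C where "convex_body C" "nbhd_in (shear u K ` C) A a"
proof -
  let ?g = "\<lambda>w. f w - K * (norm w)\<^sup>2"
  define x0 where "x0 = shear u (- K) a"
  have x0: "shear u K x0 = a"
    by (simp add: x0_def shear_shear_neg[OF u])
  have "\<exists>d>0. \<forall>x. dist x x0 < d \<longrightarrow> dist (shear u K x) (shear u K x0) < e"
    using isCont_shear[OF u, where k=K and x=x0] e unfolding continuous_at_eps_delta by blast
  then obtain d where "0 < d" and d: "\<And>x. dist x x0 < d \<Longrightarrow> dist (shear u K x) a < e"
    using x0 by auto
  define s where "s = d / 3"
  have "0 < s"
    using \<open>0 < d\<close> by (simp add: s_def)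
  then have "\<exists>\<delta>>0. \<forall>y. dist y a < \<delta> \<longrightarrow> dist (shear u (- K) y) (shear u (- K) a) < s"
    using isCont_shear[OF u, where k="- K" and x=a] unfolding continuous_at_eps_delta by blast
  then obtain \<delta> where "0 < \<delta>" and \<delta>: "\<And>y. dist y a < \<delta> \<Longrightarrow> dist (shear u (- K) y) x0 < s"
    by (auto simp: x0_def)
  define C where "C = {x. norm (perp_proj u (x - x0)) \<le> s \<and> \<bar>(x - x0) \<bullet> u\<bar> \<le> s} \<inter> hyp u ?g"
  have "a \<in> hyp u f \<inter> ball a e"
    unfolding hyp_eq[symmetric] using a e by simp
  then have "x0 \<in> hyp u ?g"
    using shear_mem_hyp_iff[OF u, of K x0 f] x0 by simp
  then have "convex_body C"
    unfolding C_def using cont conc \<open>0 < s\<close>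
    by (intro convex_body_box_Int_hyp[OF u]) (auto intro!: continuous_intros)
  moreover have "shear u K x \<in> A" if "x \<in> C" for x
  proof -
    have "norm (x - x0) \<le> 2 * s"
      using that norm_le_perp_proj_add[OF u, of "x - x0"] by (auto simp: C_def)
    then have "dist (shear u K x) a < e"
      using \<open>0 < d\<close> by (intro d) (simp add: dist_norm s_def)
    moreover have "shear u K x \<in> hyp u f"
      using that shear_mem_hyp_iff[OF u] by (simp add: C_def)
    ultimately have "shear u K x \<in> hyp u f \<inter> ball a e"
      by (simp add: dist_commute)
    then show ?thesis
      unfolding hyp_eq[symmetric] by simp
  qed
  moreover have "y \<in> shear u K ` C" if "y \<in> A" "dist a y < min \<delta> e" for y
  proof -
    define x where "x = shear u (- K) y"
    have y: "y = shear u K x"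
      by (simp add: x_def shear_shear_neg[OF u])
    have "y \<in> A \<inter> ball a e"
      using that by simp
    then have "y \<in> hyp u f"
      unfolding hyp_eq by simp
    then have "x \<in> hyp u ?g"
      using shear_mem_hyp_iff[OF u, of K x f] y by simp
    moreover have "norm (x - x0) < s"
      using \<delta>[of y] that by (simp add: x_def dist_norm norm_minus_commute)
    then have "norm (perp_proj u (x - x0)) \<le> s" "\<bar>(x - x0) \<bullet> u\<bar> \<le> s"
      using norm_perp_proj_le[OF u, of "x - x0"] abs_inner_unit_le[OF u, of "x - x0"] by simp_all
    ultimately show ?thesis
      using y by (auto simp: C_def)
  qed
  ultimately have "nbhd_in (shear u K ` C) A a"
    unfolding nbhd_in_def using \<open>0 < \<delta>\<close> e by (intro conjI exI[of _ "min \<delta> e"]) auto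
  then show thesis
    using that \<open>convex_body C\<close> by blast
qed

theorem proposition6p1:
  fixes A :: "'a::euclidean_space set" and a :: 'a
  assumes "positive_reach A"
    and "a \<in> T_dim A DIM('a)"
    and "a \<in> frontier A"
  shows "(DIM('a) \<ge> 2 \<longrightarrow>
           (\<exists>\<epsilon>>0. \<exists>u f. norm u = 1 \<and> (\<exists>L. L-lipschitz_on (perp u) f) \<and> semiconcave u f \<and>
              A \<inter> ball a \<epsilon> = hyp u f \<inter> ball a \<epsilon>))
       \<and> (\<exists>K \<Phi>. convex_body K \<and> C11_diffeo \<Phi> UNIV UNIV \<and> nbhd_in (\<Phi> ` K) A a)"
proof -
  obtain eps where "reach_ge A eps"
    using assms(1) positive_reach_iff_reach_ge by blast
  then interpret reach_ge A eps .
  have a: "a \<in> A" and "dim (Tan A a) = DIM('a)"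
    using assms(2) by (simp_all add: T_dim_def dim_span)
  then have "span (Tan A a) = UNIV"
    by (simp add: dim_eq_full)
  then obtain e u f where "0 < e" and u: "norm u = 1" and lip: "\<exists>L. L-lipschitz_on (perp u) f"
    and "semiconcave u f" and hyp_eq: "A \<inter> ball a e = hyp u f \<inter> ball a e"
    by (rule locally_semiconcave_hypograph[OF a])
  moreover obtain c where "concave_on (perp u) (\<lambda>w. f w - c / 2 * (norm w)\<^sup>2)"
    using \<open>semiconcave u f\<close> by (auto simp: semiconcave_def)
  moreover have "continuous_on (perp u) f"
    using lip lipschitz_on_continuous_on by blast
  ultimately obtain C where "convex_body C" "nbhd_in (shear u (c / 2) ` C) A a"
    using semiconcave_hypograph_shear_nbhd[OF u _ _ \<open>0 < e\<close> a hyp_eq] by blast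
  show ?thesis
  proof (intro conjI impI)
    show "\<exists>\<epsilon>>0. \<exists>u f. norm u = 1 \<and> (\<exists>L. L-lipschitz_on (perp u) f) \<and> semiconcave u f \<and>
        A \<inter> ball a \<epsilon> = hyp u f \<inter> ball a \<epsilon>"
      using \<open>0 < e\<close> u lip \<open>semiconcave u f\<close> hyp_eq by blast
    show "\<exists>K \<Phi>. convex_body K \<and> C11_diffeo \<Phi> UNIV UNIV \<and> nbhd_in (\<Phi> ` K) A a"
      using \<open>convex_body C\<close> \<open>nbhd_in (shear u (c / 2) ` C) A a\<close> C11_diffeo_shear[OF u] by blast
  qed
qed

end
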